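(* For $k\in\mathbb N$ let $\overline Y^k_t:=(Y_t\wedge k)\vee(-k)$, $t\in[0,T]$. If $Y^*\in\mathcal L^1(\mathcal Q)$ and $\rho_{\mathcal Q}$ is continuous from above at $0$, then for every $k\in\mathbb N$, $$\inf_{\mathrm Q\in\overline{\mathcal Q}}\sup_{\tau\in\mathcal T}\mathbb E_{\mathrm Q}[\overline Y^k_\tau]=\inf_{\mathrm Q\in co(\mathcal Q)}\sup_{\tau\in\mathcal T}\mathbb E_{\mathrm Q}[\overline Y^k_\tau].$$
   Context: Let $(\Omega,\mathcal F,(\mathcal F_t)_{0\le t\le T},\mathrm P)$ be a filtered probability space ($0<T<\infty$) with right-continuous filtration, $\mathcal F=\mathcal F_T$, and $\mathcal F_0$ containing only sets of probability $0$ or $1$ as well as all $\mathrm P$-null sets of $\mathcal F_T$. $\mathcal T$ is the set of stopping times $\tau\le T$. $\mathcal Q$ is a nonempty set of probability measures on $\mathcal F$, each absolutely continuous w.r.t. $\mathrm P$, $co(\mathcal Q)$ its convex hull. $\mathcal L^1(\mathcal Q)$ is the set of random variables $X$ with $\sup_{\mathrm Q\in\mathcal Q}\mathbb E_{\mathrm Q}[|X|]<\infty$. $Y=(Y_t)_{0\le t\le T}$ is a right-continuous $(\mathcal F_t)$-adapted process with bounded paths which is quasi left-uppersemicontinuous w.r.t. $\mathrm P$, i.e. $\limsup_n Y_{\tau_n}\le Y_\tau$ $\mathrm P$-a.s. whenever $\tau_n\in\mathcal T$, $\tau_n\nearrow\tau\in\mathcal T$; $Y^*:=\sup_{t\in[0,T]}|Y_t|$.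 $\mathcal X$ is the set of random variables $X$ with $|X|\le C(Y^*+1)$ $\mathrm P$-a.s. for some $C>0$; $\rho_{\mathcal Q}(X)=\sup_{\mathrm Q\in\mathcal Q}\mathbb E_{\mathrm Q}[X]$ for $X\in\mathcal X$; $\rho_{\mathcal Q}$ is continuous from above at $0$ if $\rho_{\mathcal Q}(X_n)\searrow0$ whenever $X_n\in\mathcal X$, $X_n\searrow0$ $\mathrm P$-a.s. $\overline{\mathcal Q}$ is the set of probability measures $\mathrm Q$ on $\mathcal F$ such that every $X\in\mathcal X$ is $\mathrm Q$-integrable and $\mathbb E_{\mathrm Q}[X]\le\rho_{\mathcal Q}(X)$ for all $X\in\mathcal X$. *)

theory Defs
  imports "HOL-Probability.Probability"
begin

definition filtered_space :: "'a measure \<Rightarrow> (real \<Rightarrow> 'a measure) \<Rightarrow> real \<Rightarrow> bool" where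
  "filtered_space P F T \<longleftrightarrow>
     prob_space P \<and> 0 < T \<and>
     (\<forall>t\<in>{0..T}. space (F t) = space P \<and> sets (F t) \<subseteq> sets P) \<and>
     (\<forall>s\<in>{0..T}. \<forall>t\<in>{0..T}. s \<le> t \<longrightarrow> sets (F s) \<subseteq> sets (F t)) \<and>
     sets (F T) = sets P \<and>
     (\<forall>t\<in>{0..<T}. sets (F t) = (\<Inter>s\<in>{t<..T}. sets (F s))) \<and>
     (\<forall>A\<in>sets (F 0). measure P A = 0 \<or> measure P A = 1) \<and>
     null_sets P \<subseteq> sets (F 0)"

definition stopping_times :: "'a measure \<Rightarrow> (real \<Rightarrow> 'a measure) \<Rightarrow> real \<Rightarrow> ('a \<Rightarrow> real) set" where
  "stopping_times P F T = {\<tau>. (\<forall>\<omega>\<in>space P. 0 \<le> \<tau> \<omega> \<and> \<tau> \<omega> \<le> T) \<and>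
      (\<forall>t\<in>{0..T}. {\<omega>\<in>space P. \<tau> \<omega> \<le> t} \<in> sets (F t))}"

definition admissible_process ::
  "'a measure \<Rightarrow> (real \<Rightarrow> 'a measure) \<Rightarrow> real \<Rightarrow> (real \<Rightarrow> 'a \<Rightarrow> real) \<Rightarrow> bool" where
  "admissible_process P F T Y \<longleftrightarrow>
     (\<forall>\<omega>\<in>space P. \<forall>t\<in>{0..<T}. continuous (at_right t) (\<lambda>s. Y s \<omega>)) \<and>
     (\<forall>t\<in>{0..T}. Y t \<in> borel_measurable (F t)) \<and>
     (\<forall>\<omega>\<in>space P. \<exists>B. \<forall>t\<in>{0..T}. \<bar>Y t \<omega>\<bar> \<le> B) \<and>
     (\<forall>\<tau>s \<tau>. (\<forall>n. \<tau>s n \<in> stopping_times P F T) \<longrightarrow> \<tau> \<in> stopping_times P F T \<longrightarrow>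
        (\<forall>\<omega>\<in>space P. incseq (\<lambda>n. \<tau>s n \<omega>) \<and> (\<lambda>n. \<tau>s n \<omega>) \<longlonglongrightarrow> \<tau> \<omega>) \<longrightarrow>
        (AE \<omega> in P. limsup (\<lambda>n. ereal (Y (\<tau>s n \<omega>) \<omega>)) \<le> ereal (Y (\<tau> \<omega>) \<omega>)))"

definition Ystar :: "real \<Rightarrow> (real \<Rightarrow> 'a \<Rightarrow> real) \<Rightarrow> 'a \<Rightarrow> real" where
  "Ystar T Y \<omega> = (SUP t\<in>{0..T}. \<bar>Y t \<omega>\<bar>)"

definition admissible_Qs :: "'a measure \<Rightarrow> 'a measure set \<Rightarrow> bool" where
  "admissible_Qs P Qs \<longleftrightarrow> Qs \<noteq> {} \<and>
     (\<forall>Q\<in>Qs. prob_space Q \<and> sets Q = sets P \<and> absolutely_continuous P Q)"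

definition co_meas :: "'a measure \<Rightarrow> 'a measure set \<Rightarrow> 'a measure set" where
  "co_meas P Qs = {Q. sets Q = sets P \<and>
     (\<exists>I w. finite I \<and> I \<noteq> {} \<and> I \<subseteq> Qs \<and> (\<forall>q\<in>I. 0 \<le> w q) \<and> sum w I = 1 \<and>
        (\<forall>A\<in>sets P. emeasure Q A = (\<Sum>q\<in>I. ennreal (w q) * emeasure q A)))}"

definition L1_Qs :: "'a measure \<Rightarrow> 'a measure set \<Rightarrow> ('a \<Rightarrow> real) set" where
  "L1_Qs P Qs = {X. X \<in> borel_measurable P \<and> (SUP Q\<in>Qs. \<integral>\<^sup>+ x. ennreal \<bar>X x\<bar> \<partial>Q) < \<infinity>}"

definition Xspace :: "'a measure \<Rightarrow> real \<Rightarrow> (real \<Rightarrow> 'a \<Rightarrow> real) \<Rightarrow> ('a \<Rightarrow> real) set" where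
  "Xspace P T Y = {X. X \<in> borel_measurable P \<and>
     (\<exists>C>0. AE \<omega> in P. \<bar>X \<omega>\<bar> \<le> C * (Ystar T Y \<omega> + 1))}"

definition rhoQ :: "'a measure set \<Rightarrow> ('a \<Rightarrow> real) \<Rightarrow> ereal" where
  "rhoQ Qs X = (SUP Q\<in>Qs. ereal (\<integral> \<omega>. X \<omega> \<partial>Q))"

definition cont_from_above_at_0 ::
  "'a measure \<Rightarrow> real \<Rightarrow> (real \<Rightarrow> 'a \<Rightarrow> real) \<Rightarrow> 'a measure set \<Rightarrow> bool" where
  "cont_from_above_at_0 P T Y Qs \<longleftrightarrow>
     (\<forall>Xs. (\<forall>n. Xs n \<in> Xspace P T Y) \<longrightarrow>
        (AE \<omega> in P. decseq (\<lambda>n. Xs n \<omega>) \<and> (\<lambda>n. Xs n \<omega>) \<longlonglongrightarrow> 0) \<longrightarrow>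
        decseq (\<lambda>n. rhoQ Qs (Xs n)) \<and> (\<lambda>n. rhoQ Qs (Xs n)) \<longlonglongrightarrow> 0)"

definition Qbar :: "'a measure \<Rightarrow> real \<Rightarrow> (real \<Rightarrow> 'a \<Rightarrow> real) \<Rightarrow> 'a measure set \<Rightarrow> 'a measure set" where
  "Qbar P T Y Qs = {Q. prob_space Q \<and> sets Q = sets P \<and>
     (\<forall>X\<in>Xspace P T Y. integrable Q X \<and> ereal (\<integral> \<omega>. X \<omega> \<partial>Q) \<le> rhoQ Qs X)}"

definition Ytrunc :: "nat \<Rightarrow> (real \<Rightarrow> 'a \<Rightarrow> real) \<Rightarrow> real \<Rightarrow> 'a \<Rightarrow> real" where
  "Ytrunc k Y t \<omega> = max (min (Y t \<omega>) (real k)) (- real k)"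

end

theory Submission
  imports Defs
begin

text \<open>Every measure of co(Qs) lies in Qbar, which gives one inequality. Conversely, a measure Q in
  Qbar is absolutely continuous with respect to P, and its density lies in the L1(P)-closure of the
  convex set of densities of co(Qs): otherwise Hahn-Banach in L1(P), together with the representation
  of bounded functionals on L1 by bounded functions, yields a bounded X with
  E_q[X] \<ge> E_Q[X] + \<eta> for all q in Qs, that is E_Q[-X] > rhoQ(-X), contradicting Q in Qbar.
  Since the truncated process is bounded by k, the map Q \<mapsto> sup_\<tau> E_Q[Y^k_\<tau>] is
  k-Lipschitz in the L1 distance of densities, so the infimum over co(Qs) is at most its value at Q.\<close>

text \<open>A linear functional on a subspace of V dominated by p, encoded by its graph so that
  Zorn's lemma can order extensions by inclusion.\<close>
definition dominated_linear_graph :: "('a\<Rightarrow>real) set \<Rightarrow> (('a\<Rightarrow>real) \<Rightarrow> real) \<Rightarrow> (('a\<Rightarrow>real) \<times> real) set \<Rightarrow> bool" where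
"dominated_linear_graph V p G \<longleftrightarrow> (\<forall>(x,a)\<in>G. x \<in> V \<and> a \<le> p x) \<and> ((\<lambda>_. 0), 0) \<in> G \<and>
   (\<forall>(x,a)\<in>G. \<forall>(y,b)\<in>G. ((\<lambda>w. x w + y w), a+b) \<in> G) \<and> (\<forall>(x,a)\<in>G. \<forall>c. ((\<lambda>w. c * x w), c*a) \<in> G)"

definition sublinear_on :: "('a\<Rightarrow>real) set \<Rightarrow> (('a\<Rightarrow>real) \<Rightarrow> real) \<Rightarrow> bool" where
"sublinear_on V p \<longleftrightarrow> (\<lambda>_. 0) \<in> V \<and> (\<forall>x\<in>V. \<forall>y\<in>V. (\<lambda>w. x w + y w) \<in> V) \<and> (\<forall>x\<in>V. \<forall>c. (\<lambda>w. c * x w) \<in> V)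
  \<and> (\<forall>x\<in>V. \<forall>y\<in>V. p (\<lambda>w. x w + y w) \<le> p x + p y) \<and> (\<forall>x\<in>V. \<forall>c\<ge>0. p (\<lambda>w. c * x w) = c * p x)"

lemma sublinear_onD:
  assumes "sublinear_on V p"
  shows "(\<lambda>_. 0) \<in> V" "\<And>x y. x\<in>V \<Longrightarrow> y\<in>V \<Longrightarrow> (\<lambda>w. x w + y w) \<in> V"
    "\<And>x c. x\<in>V \<Longrightarrow> (\<lambda>w. c * x w) \<in> V"
    "\<And>x y. x\<in>V \<Longrightarrow> y\<in>V \<Longrightarrow> p (\<lambda>w. x w + y w) \<le> p x + p y"
    "\<And>x c. x\<in>V \<Longrightarrow> c \<ge> 0 \<Longrightarrow> p (\<lambda>w. c * x w) = c * p x"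
  using assms unfolding sublinear_on_def by blast+

lemma dominated_linear_graphD:
  assumes "dominated_linear_graph V p G"
  shows "\<And>x a. (x,a)\<in>G \<Longrightarrow> x \<in> V" "\<And>x a. (x,a)\<in>G \<Longrightarrow> a \<le> p x"
    "\<And>x a y b. (x,a)\<in>G \<Longrightarrow> (y,b)\<in>G \<Longrightarrow> ((\<lambda>w. x w + y w), a+b) \<in> G"
    "\<And>x a c. (x,a)\<in>G \<Longrightarrow> ((\<lambda>w. c * x w), c*a) \<in> G" "((\<lambda>_. 0), 0) \<in> G"
  using assms unfolding dominated_linear_graph_def by blast+

lemma sublinear_on_zero: assumes "sublinear_on V p" shows "p (\<lambda>_. 0) = 0"
  using sublinear_onD(5)[OF assms sublinear_onD(1)[OF assms], of 0] by simp

lemma dominated_linear_graph_unique: assumes "sublinear_on V p" "dominated_linear_graph V p G" "(x,a)\<in>G" "(x,b)\<in>G" shows "a = b"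
proof -
  have 1: "((\<lambda>_. 0), a - b) \<in> G"
    using dominated_linear_graphD(3)[OF assms(2) assms(3) dominated_linear_graphD(4)[OF assms(2) assms(4), of "-1"]] by simp
  have 2: "((\<lambda>_. 0), b - a) \<in> G"
    using dominated_linear_graphD(3)[OF assms(2) assms(4) dominated_linear_graphD(4)[OF assms(2) assms(3), of "-1"]] by simp
  have "a - b \<le> p (\<lambda>_. 0)" "b - a \<le> p (\<lambda>_. 0)" using dominated_linear_graphD(2)[OF assms(2)] 1 2 by auto
  then show ?thesis using sublinear_on_zero[OF assms(1)] by simp
qed

lemma dominated_linear_graph_gap:
  assumes sl: "sublinear_on V p" and G: "dominated_linear_graph V p G" and zV: "z \<in> V"
  obtains c where "\<And>y a. (y,a)\<in>G \<Longrightarrow> a - p (\<lambda>w. y w - z w) \<le> c"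
    and "\<And>y a. (y,a)\<in>G \<Longrightarrow> c \<le> p (\<lambda>w. y w + z w) - a"
proof -
  have Vadd: "\<And>x y. x\<in>V \<Longrightarrow> y\<in>V \<Longrightarrow> (\<lambda>w. x w + y w) \<in> V"
    and Vsc: "\<And>x c. x\<in>V \<Longrightarrow> (\<lambda>w. c * x w) \<in> V"
    and padd: "\<And>x y. x\<in>V \<Longrightarrow> y\<in>V \<Longrightarrow> p (\<lambda>w. x w + y w) \<le> p x + p y"
    using sublinear_onD[OF sl] by blast+
  have Gin: "\<And>x a. (x,a)\<in>G \<Longrightarrow> x \<in> V \<and> a \<le> p x"
    and Gadd: "\<And>x a y b. (x,a)\<in>G \<Longrightarrow> (y,b)\<in>G \<Longrightarrow> ((\<lambda>w. x w + y w), a+b) \<in> G"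
    and G0: "((\<lambda>_. 0), 0) \<in> G"
    using dominated_linear_graphD[OF G] by blast+
  define S where "S = (\<lambda>(y,a). a - p (\<lambda>w. y w - z w)) ` G"
  have key: "a - p (\<lambda>w. y w - z w) \<le> p (\<lambda>w. y' w + z w) - a'" if "(y,a)\<in>G" "(y',a')\<in>G" for y a y' a'
  proof -
    have yV: "y \<in> V" "y' \<in> V" using Gin that by auto
    have mz: "(\<lambda>w. (-1) * z w) \<in> V" using Vsc zV by blast
    have a1: "(\<lambda>w. y w - z w) \<in> V" using Vadd[OF yV(1) mz] by simp
    have a2: "(\<lambda>w. y' w + z w) \<in> V" using Vadd[OF yV(2) zV] by simp
    have "a + a' \<le> p (\<lambda>w. y w + y' w)" using Gin[OF Gadd[OF that]] by simp
    also have "(\<lambda>w. y w + y' w) = (\<lambda>w. (\<lambda>w. y w - z w) w + (\<lambda>w. y' w + z w) w)" by auto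
    also have "p \<dots> \<le> p (\<lambda>w. y w - z w) + p (\<lambda>w. y' w + z w)" using padd[OF a1 a2] .
    finally show ?thesis by simp
  qed
  have Sne: "S \<noteq> {}" using G0 unfolding S_def by auto
  have Sbdd: "bdd_above S" unfolding S_def bdd_above_def using key G0 by fastforce
  define c where "c = Sup S"
  have c1: "a - p (\<lambda>w. y w - z w) \<le> c" if "(y,a)\<in>G" for y a
    unfolding c_def by (rule cSup_upper[OF _ Sbdd]) (use that S_def in force)
  have c2: "c \<le> p (\<lambda>w. y' w + z w) - a'" if "(y',a')\<in>G" for y' a'
    unfolding c_def by (rule cSup_least[OF Sne]) (use key that S_def in force)
  show ?thesis by (rule that[OF c1 c2])
qed

lemma dominated_linear_graph_step:
  assumes sl: "sublinear_on V p" and G: "dominated_linear_graph V p G" and zV: "z \<in> V"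
    and c1: "\<And>y a. (y,a)\<in>G \<Longrightarrow> a - p (\<lambda>w. y w - z w) \<le> c"
    and c2: "\<And>y a. (y,a)\<in>G \<Longrightarrow> c \<le> p (\<lambda>w. y w + z w) - a"
    and ya: "(y,a)\<in>G"
  shows "a + t * c \<le> p (\<lambda>w. y w + t * z w)"
proof -
  have Vadd: "\<And>x y. x\<in>V \<Longrightarrow> y\<in>V \<Longrightarrow> (\<lambda>w. x w + y w) \<in> V"
    and Vsc: "\<And>x c. x\<in>V \<Longrightarrow> (\<lambda>w. c * x w) \<in> V"
    and psc: "\<And>x c. x\<in>V \<Longrightarrow> c \<ge> 0 \<Longrightarrow> p (\<lambda>w. c * x w) = c * p x"
    using sublinear_onD[OF sl] by blast+
  have Gin: "\<And>x a. (x,a)\<in>G \<Longrightarrow> x \<in> V \<and> a \<le> p x"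
    and Gsc: "\<And>x a c. (x,a)\<in>G \<Longrightarrow> ((\<lambda>w. c * x w), c*a) \<in> G"
    using dominated_linear_graphD[OF G] by blast+
  show ?thesis
  proof (cases "t = 0")
    case True then show ?thesis using Gin[OF ya] by simp
  next
    case False
    show ?thesis
    proof (cases "t > 0")
      case True
      have "((\<lambda>w. (1/t) * y w), (1/t)*a) \<in> G" using Gsc[OF ya] .
      from c2[OF this] have "c \<le> p (\<lambda>w. (1/t) * y w + z w) - (1/t)*a" .
      moreover have "(\<lambda>w. (1/t) * y w + z w) = (\<lambda>w. (1/t) * (\<lambda>w. y w + t * z w) w)"
        using True by (auto simp: field_simps)
      moreover have "(\<lambda>w. y w + t * z w) \<in> V" using Vadd[OF _ Vsc[OF zV]] Gin[OF ya] by blast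
      ultimately have "c \<le> (1/t) * p (\<lambda>w. y w + t * z w) - (1/t)*a" using psc[of _ "1/t"] True by simp
      then have "t * c \<le> t * ((1/t) * p (\<lambda>w. y w + t * z w) - (1/t)*a)" using True by (simp add: mult_left_mono)
      also have "t * ((1/t) * p (\<lambda>w. y w + t * z w) - (1/t)*a) = p (\<lambda>w. y w + t * z w) - a"
        using True by (simp add: field_simps)
      finally show ?thesis by (simp add: algebra_simps)
    next
      case False2: False
      define s where "s = - t"
      have s: "s > 0" using False False2 s_def by simp
      have "((\<lambda>w. (1/s) * y w), (1/s)*a) \<in> G" using Gsc[OF ya] .
      from c1[OF this] have "(1/s)*a - p (\<lambda>w. (1/s) * y w - z w) \<le> c" .
      moreover have "(\<lambda>w. (1/s) * y w - z w) = (\<lambda>w. (1/s) * (\<lambda>w. y w + t * z w) w)"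
        using s by (auto simp: field_simps s_def)
      moreover have "(\<lambda>w. y w + t * z w) \<in> V" using Vadd[OF _ Vsc[OF zV]] Gin[OF ya] by blast
      ultimately have "(1/s)*a - (1/s) * p (\<lambda>w. y w + t * z w) \<le> c" using psc[of _ "1/s"] s by simp
      then have "s * ((1/s)*a - (1/s) * p (\<lambda>w. y w + t * z w)) \<le> s * c" using s by (simp add: mult_left_mono)
      also have "s * ((1/s)*a - (1/s) * p (\<lambda>w. y w + t * z w)) = a - p (\<lambda>w. y w + t * z w)"
        using s by (simp add: field_simps)
      finally show ?thesis by (simp add: s_def algebra_simps)
    qed
  qed
qed

lemma dominated_linear_graph_extend:
  assumes sl: "sublinear_on V p" and G: "dominated_linear_graph V p G" and zV: "z \<in> V" and zn: "z \<notin> fst ` G"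
  shows "\<exists>G'. dominated_linear_graph V p G' \<and> G \<subseteq> G' \<and> G' \<noteq> G"
proof -
  have Vadd: "\<And>x y. x\<in>V \<Longrightarrow> y\<in>V \<Longrightarrow> (\<lambda>w. x w + y w) \<in> V"
    and Vsc: "\<And>x c. x\<in>V \<Longrightarrow> (\<lambda>w. c * x w) \<in> V"
    using sublinear_onD[OF sl] by blast+
  have Gin: "\<And>x a. (x,a)\<in>G \<Longrightarrow> x \<in> V \<and> a \<le> p x"
    and Gadd: "\<And>x a y b. (x,a)\<in>G \<Longrightarrow> (y,b)\<in>G \<Longrightarrow> ((\<lambda>w. x w + y w), a+b) \<in> G"
    and Gsc: "\<And>x a c. (x,a)\<in>G \<Longrightarrow> ((\<lambda>w. c * x w), c*a) \<in> G"
    and G0: "((\<lambda>_. 0), 0) \<in> G"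
    using dominated_linear_graphD[OF G] by blast+
  obtain c where c1: "\<And>y a. (y,a)\<in>G \<Longrightarrow> a - p (\<lambda>w. y w - z w) \<le> c"
    and c2: "\<And>y a. (y,a)\<in>G \<Longrightarrow> c \<le> p (\<lambda>w. y w + z w) - a"
    using dominated_linear_graph_gap[OF sl G zV] by blast
  have dom: "a + t * c \<le> p (\<lambda>w. y w + t * z w)" if "(y,a)\<in>G" for y a t
    by (rule dominated_linear_graph_step[OF sl G zV c1 c2 that])
  define G' where "G' = {((\<lambda>w. y w + t * z w), a + t * c) | y a t. (y,a)\<in>G}"
  have G'I: "((\<lambda>w. y w + t * z w), a + t*c) \<in> G'" if "(y,a)\<in>G" for y a t
    unfolding G'_def using that by (intro CollectI exI conjI) (rule refl, assumption)
  have "dominated_linear_graph V p G'"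
    unfolding dominated_linear_graph_def
  proof (intro conjI)
    show "\<forall>(x, a)\<in>G'. x \<in> V \<and> a \<le> p x"
    proof (clarify)
      fix x a assume "(x,a)\<in>G'"
      then obtain x1 a1 t1 where h: "(x1,a1)\<in>G"
        "x = (\<lambda>w. x1 w + t1 * z w)" "a = a1 + t1 * c" unfolding G'_def by blast
      show "x \<in> V \<and> a \<le> p x" using h dom[OF h(1)] Vadd[OF conjunct1[OF Gin[OF h(1)]] Vsc[OF zV]] by simp
    qed
    show "((\<lambda>_. 0), 0) \<in> G'" using G'I[OF G0, of 0] by simp
    show "\<forall>(x, a)\<in>G'. \<forall>(y, b)\<in>G'. ((\<lambda>w. x w + y w), a + b) \<in> G'"
    proof (clarify)
      fix x a y b assume "(x,a)\<in>G'" "(y,b)\<in>G'"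
      then obtain x1 a1 t1 x2 a2 t2 where h: "(x1,a1)\<in>G" "(x2,a2)\<in>G"
        "x = (\<lambda>w. x1 w + t1 * z w)" "a = a1 + t1 * c" "y = (\<lambda>w. x2 w + t2 * z w)" "b = a2 + t2*c"
        unfolding G'_def by blast
      have "((\<lambda>w. (\<lambda>w. x1 w + x2 w) w + (t1+t2) * z w), (a1+a2) + (t1+t2)*c) \<in> G'"
        using G'I[OF Gadd[OF h(1,2)]] by simp
      then show "((\<lambda>w. x w + y w), a + b) \<in> G'" using h by (simp add: algebra_simps)
    qed
    show "\<forall>(x, a)\<in>G'. \<forall>c'. ((\<lambda>w. c' * x w), c' * a) \<in> G'"
    proof (clarify)
      fix x a c' assume "(x,a)\<in>G'"
      then obtain x1 a1 t1 where h: "(x1,a1)\<in>G"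
        "x = (\<lambda>w. x1 w + t1 * z w)" "a = a1 + t1 * c" unfolding G'_def by blast
      have "((\<lambda>w. (\<lambda>w. c' * x1 w) w + (c'*t1) * z w), c'*a1 + (c'*t1)*c) \<in> G'"
        using G'I[OF Gsc[OF h(1)]] by simp
      then show "((\<lambda>w. c' * x w), c' * a) \<in> G'" using h by (simp add: algebra_simps)
    qed
  qed
  moreover have "G \<subseteq> G'"
  proof
    fix q assume "q \<in> G"
    then obtain y a where "q = (y,a)" "(y,a)\<in>G" by (cases q) auto
    then show "q \<in> G'" using G'I[of y a 0] by simp
  qed
  moreover have "(z, c) \<in> G'" using G'I[OF G0, of 1] by simp
  then have "G' \<noteq> G" using zn by force
  ultimately show ?thesis by blast
qed

lemma dominated_linear_graph_Union:
  assumes sl: "sublinear_on V p" and C: "C \<noteq> {}" "\<And>G. G \<in> C \<Longrightarrow> dominated_linear_graph V p G"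
    and ch: "\<And>G H. G \<in> C \<Longrightarrow> H \<in> C \<Longrightarrow> G \<subseteq> H \<or> H \<subseteq> G"
  shows "dominated_linear_graph V p (\<Union>C)"
  unfolding dominated_linear_graph_def
proof (intro conjI)
  show "\<forall>(x, a)\<in>\<Union>C. x \<in> V \<and> a \<le> p x" using C(2) dominated_linear_graphD(1,2) by fast
  show "((\<lambda>_. 0), 0) \<in> \<Union>C" using C dominated_linear_graphD(5) by blast
  show "\<forall>(x, a)\<in>\<Union>C. \<forall>(y, b)\<in>\<Union>C. ((\<lambda>w. x w + y w), a + b) \<in> \<Union>C"
  proof (clarify)
    fix x a y b G H assume h: "(x,a)\<in>G" "G\<in>C" "(y,b)\<in>H" "H\<in>C"
    show "((\<lambda>w. x w + y w), a + b) \<in> \<Union>C"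
    proof (cases "G \<subseteq> H")
      case True then show ?thesis using dominated_linear_graphD(3)[OF C(2)[OF h(4)], of x a y b] h by blast
    next
      case False then have "H \<subseteq> G" using ch h by blast
      then show ?thesis using dominated_linear_graphD(3)[OF C(2)[OF h(2)], of x a y b] h by blast
    qed
  qed
  show "\<forall>(x, a)\<in>\<Union>C. \<forall>c. ((\<lambda>w. c * x w), c * a) \<in> \<Union>C"
    using C(2) dominated_linear_graphD(4) by fast
qed

lemma dominated_linear_graph_line:
  assumes sl: "sublinear_on V p" and x0: "x0 \<in> V"
  shows "dominated_linear_graph V p {((\<lambda>w. s * x0 w), s * p x0) | s. True}"
proof -
  note SD = sublinear_onD[OF sl]
  define G where "G = {((\<lambda>w. s * x0 w), s * p x0) | s. True}"
  have pneg: "s * p x0 \<le> p (\<lambda>w. s * x0 w)" for s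
  proof (cases "s \<ge> 0")
    case True then show ?thesis using SD(5)[OF x0] by simp
  next
    case False
    have a: "(\<lambda>w. s * x0 w) \<in> V" "(\<lambda>w. (-s) * x0 w) \<in> V" using SD(3)[OF x0] by blast+
    have "p (\<lambda>w. (\<lambda>w. s * x0 w) w + (\<lambda>w. (-s) * x0 w) w) \<le> p (\<lambda>w. s * x0 w) + p (\<lambda>w. (-s) * x0 w)"
      using SD(4)[OF a] .
    moreover have "(\<lambda>w. (\<lambda>w. s * x0 w) w + (\<lambda>w. (-s) * x0 w) w) = (\<lambda>_. 0)" by auto
    moreover have "p (\<lambda>w. (-s) * x0 w) = (-s) * p x0" using SD(5)[OF x0, of "-s"] False by simp
    ultimately show ?thesis using sublinear_on_zero[OF sl] by simp
  qed
  have lineI: "((\<lambda>w. s * x0 w), s * p x0) \<in> G" for s unfolding G_def by blast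
  have "dominated_linear_graph V p G" unfolding dominated_linear_graph_def
  proof (intro conjI)
    show "\<forall>(x, a)\<in>G. x \<in> V \<and> a \<le> p x" unfolding G_def using pneg SD(3)[OF x0] by auto
    show "((\<lambda>_. 0), 0) \<in> G" using lineI[of 0] by simp
    show "\<forall>(x, a)\<in>G. \<forall>(y, b)\<in>G. ((\<lambda>w. x w + y w), a + b) \<in> G"
    proof (clarify)
      fix x a y b assume "(x,a)\<in>G" "(y,b)\<in>G"
      then obtain s t where "x = (\<lambda>w. s * x0 w)" "a = s * p x0" "y = (\<lambda>w. t * x0 w)" "b = t * p x0"
        unfolding G_def by blast
      then show "((\<lambda>w. x w + y w), a + b) \<in> G" using lineI[of "s + t"] by (simp add: algebra_simps)
    qed
    show "\<forall>(x, a)\<in>G. \<forall>c. ((\<lambda>w. c * x w), c * a) \<in> G"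
    proof (clarify)
      fix x a c assume "(x,a)\<in>G"
      then obtain s where "x = (\<lambda>w. s * x0 w)" "a = s * p x0" unfolding G_def by blast
      then show "((\<lambda>w. c * x w), c * a) \<in> G" using lineI[of "c * s"] by (simp add: algebra_simps)
    qed
  qed
  then show ?thesis unfolding G_def .
qed

lemma dominated_linear_graph_maximal:
  assumes sl: "sublinear_on V p" and G0: "dominated_linear_graph V p G0"
  obtains M where "dominated_linear_graph V p M" "G0 \<subseteq> M" "V \<subseteq> fst ` M"
proof -
  define A where "A = {G. dominated_linear_graph V p G \<and> G0 \<subseteq> G}"
  have "\<forall>C\<in>chains A. \<exists>U\<in>A. \<forall>X\<in>C. X \<subseteq> U"
  proof
    fix C assume C: "C \<in> chains A"
    show "\<exists>U\<in>A. \<forall>X\<in>C. X \<subseteq> U"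
    proof (cases "C = {}")
      case True then show ?thesis using G0 unfolding A_def by blast
    next
      case False
      have "dominated_linear_graph V p (\<Union>C)"
        by (rule dominated_linear_graph_Union[OF sl False]) (use C in \<open>auto simp: chains_def A_def chain_subset_def\<close>)
      moreover have "G0 \<subseteq> \<Union>C" using False C by (auto simp: chains_def A_def)
      ultimately show ?thesis unfolding A_def by blast
    qed
  qed
  from Zorn_Lemma2[OF this] obtain M where M: "M \<in> A" "\<And>X. X\<in>A \<Longrightarrow> M \<subseteq> X \<Longrightarrow> X = M" by blast
  have lgM: "dominated_linear_graph V p M" and G0M: "G0 \<subseteq> M" using M(1) unfolding A_def by auto
  have "x \<in> fst ` M" if "x \<in> V" for x
  proof (rule ccontr)
    assume "x \<notin> fst ` M"
    from dominated_linear_graph_extend[OF sl lgM that this]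
    obtain G' where "dominated_linear_graph V p G'" "M \<subseteq> G'" "G' \<noteq> M" by blast
    then show False using M(2)[of G'] G0M unfolding A_def by blast
  qed
  with lgM G0M show ?thesis by (intro that) auto
qed

lemma hahn_banach_sublinear:
  assumes sl: "sublinear_on V p" and x0: "x0 \<in> V"
  shows "\<exists>l. (\<forall>x\<in>V. \<forall>y\<in>V. l (\<lambda>w. x w + y w) = l x + l y) \<and> (\<forall>x\<in>V. \<forall>c. l (\<lambda>w. c * x w) = c * l x)
     \<and> (\<forall>x\<in>V. l x \<le> p x) \<and> l x0 = p x0"
proof -
  note SD = sublinear_onD[OF sl]
  define G0 where "G0 = {((\<lambda>w. s * x0 w), s * p x0) | s. True}"
  have "dominated_linear_graph V p G0"
    unfolding G0_def by (rule dominated_linear_graph_line[OF sl x0])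
  then obtain M where lgM: "dominated_linear_graph V p M" and G0M: "G0 \<subseteq> M" and dom: "V \<subseteq> fst ` M"
    using dominated_linear_graph_maximal[OF sl] by blast
  define l where "l x = (THE a. (x,a) \<in> M)" for x
  have lM: "(x, l x) \<in> M" if xV: "x \<in> V" for x
  proof -
    obtain a where a: "(x,a)\<in>M" using dom xV by force
    have "(THE a. (x,a) \<in> M) = a"
      by (rule the_equality[where P="\<lambda>a. (x,a)\<in>M", OF a]) (use dominated_linear_graph_unique[OF sl lgM a] in auto)
    then show ?thesis using a l_def by simp
  qed
  have lu: "l x = a" if "(x,a)\<in>M" "x \<in> V" for x a
    using dominated_linear_graph_unique[OF sl lgM lM[OF that(2)] that(1)] .
  show ?thesis
  proof (intro exI conjI ballI allI)
    fix x y assume "x\<in>V" "y\<in>V"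
    then show "l (\<lambda>w. x w + y w) = l x + l y"
      using lu[OF dominated_linear_graphD(3)[OF lgM lM lM]] SD(2) by blast
  next
    fix x c assume "x \<in> V"
    then show "l (\<lambda>w. c * x w) = c * l x" using lu[OF dominated_linear_graphD(4)[OF lgM lM]] SD(3) by blast
  next
    fix x assume "x\<in>V" then show "l x \<le> p x" using dominated_linear_graphD(2)[OF lgM lM] by blast
  next
    have "(x0, p x0) \<in> G0" unfolding G0_def by (rule CollectI, rule exI[of _ 1]) simp
    then show "l x0 = p x0" using lu[of x0 "p x0"] G0M x0 by auto
  qed
qed

definition L1_norm :: "'a measure \<Rightarrow> ('a \<Rightarrow> real) \<Rightarrow> real" where
  "L1_norm M x = (\<integral>w. \<bar>x w\<bar> \<partial>M)"

lemma L1_norm_nonneg: "0 \<le> L1_norm M x" unfolding L1_norm_def by simp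

lemma L1_norm_triangle: assumes "integrable M x" "integrable M y"
  shows "L1_norm M (\<lambda>w. x w + y w) \<le> L1_norm M x + L1_norm M y"
proof -
  have "(\<integral>w. \<bar>x w + y w\<bar> \<partial>M) \<le> (\<integral>w. \<bar>x w\<bar> + \<bar>y w\<bar> \<partial>M)"
    by (rule integral_mono) (use assms in auto)
  also have "\<dots> = (\<integral>w. \<bar>x w\<bar> \<partial>M) + (\<integral>w. \<bar>y w\<bar> \<partial>M)" using assms by (simp add: Bochner_Integration.integral_add)
  finally show ?thesis unfolding L1_norm_def .
qed

lemma L1_norm_scale: "L1_norm M (\<lambda>w. c * x w) = \<bar>c\<bar> * L1_norm M x"
  unfolding L1_norm_def by (simp add: abs_mult)

lemma L1_norm_minus [simp]: "L1_norm M (\<lambda>w. - x w) = L1_norm M x"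
  by (simp add: L1_norm_def)

lemma L1_norm_reverse_triangle: assumes "integrable M x" "integrable M y"
  shows "L1_norm M x - L1_norm M y \<le> L1_norm M (\<lambda>w. x w + y w)"
proof -
  have "L1_norm M (\<lambda>w. (\<lambda>w. x w + y w) w + (\<lambda>w. (-1) * y w) w) \<le> L1_norm M (\<lambda>w. x w + y w) + L1_norm M (\<lambda>w. (-1) * y w)"
    by (rule L1_norm_triangle) (use assms in auto)
  moreover have "L1_norm M (\<lambda>w. - y w) = L1_norm M y" by (simp add: L1_norm_def)
  ultimately show ?thesis by simp
qed

lemma AE_le_of_density_le:
  assumes fm: "finite_measure M" and f: "f \<in> borel_measurable M" and c: "0 \<le> c"
    and le: "\<And>A. A \<in> sets M \<Longrightarrow> emeasure (density M f) A \<le> ennreal (c * measure M A)"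
  shows "AE x in M. f x \<le> ennreal c"
proof -
  interpret finite_measure M by fact
  define B where "B = {x\<in>space M. ennreal c < f x}"
  have B: "B \<in> sets M" unfolding B_def using f by measurable
  have m: "(\<lambda>x. ennreal c * indicator B x) \<in> borel_measurable M" "(\<lambda>x. f x * indicator B x) \<in> borel_measurable M"
    using B f by auto
  have iB: "(\<integral>\<^sup>+x. ennreal c * indicator B x \<partial>M) = ennreal (c * measure M B)"
    using B c by (simp add: nn_integral_cmult emeasure_eq_measure ennreal_mult)
  have below: "AE x in M. ennreal c * indicator B x \<le> f x * indicator B x"
    by (rule AE_I2) (auto simp: B_def indicator_def less_imp_le)
  have "AE x in M. f x * indicator B x \<le> ennreal c * indicator B x"
  proof (rule ccontr)
    assume "\<not> (AE x in M. f x * indicator B x \<le> ennreal c * indicator B x)"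
    then have "(\<integral>\<^sup>+x. ennreal c * indicator B x \<partial>M) < (\<integral>\<^sup>+x. f x * indicator B x \<partial>M)"
      by (intro nn_integral_less[OF m _ below]) (simp_all add: iB)
    also have "\<dots> = emeasure (density M f) B" using emeasure_density[OF f B] by simp
    also have "\<dots> \<le> ennreal (c * measure M B)" using le[OF B] .
    finally show False using iB by simp
  qed
  then show ?thesis
    by (rule AE_mp) (intro AE_I2, auto simp: B_def indicator_def not_less)
qed

locale L1_bounded_functional = finite_measure M
  for M :: "'a measure" and l :: "('a \<Rightarrow> real) \<Rightarrow> real" +
  assumes additive: "\<And>x y. integrable M x \<Longrightarrow> integrable M y \<Longrightarrow> l (\<lambda>w. x w + y w) = l x + l y"
    and homogeneous: "\<And>x c. integrable M x \<Longrightarrow> l (\<lambda>w. c * x w) = c * l x"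
    and bounded: "\<And>x. integrable M x \<Longrightarrow> \<bar>l x\<bar> \<le> L1_norm M x"
begin

lemma integrable_indicator_set: "A \<in> sets M \<Longrightarrow> integrable M (indicator A :: 'a \<Rightarrow> real)"
  by (simp add: integrable_indicator_iff sets.Int_space_eq2 less_top[symmetric])

lemma zero: "l (\<lambda>_. 0) = 0"
  using homogeneous[of "\<lambda>_. 0" 0] by simp

lemma abs_indicator_le: "A \<in> sets M \<Longrightarrow> \<bar>l (indicator A)\<bar> \<le> measure M A"
  using bounded[OF integrable_indicator_set] by (simp add: L1_norm_def sets.Int_space_eq2)

lemma indicator_Diff:
  assumes "A \<in> sets M" "B \<in> sets M" "B \<subseteq> A"
  shows "l (indicator (A - B)) = l (indicator A) - l (indicator B)"
proof -
  have "(indicator A :: 'a \<Rightarrow> real) = (\<lambda>w. indicator B w + indicator (A - B) w)"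
    using assms(3) by (auto simp: indicator_def fun_eq_iff)
  then have "l (indicator A) = l (indicator B) + l (indicator (A - B))"
    using additive[OF integrable_indicator_set integrable_indicator_set] assms by (metis sets.Diff)
  then show ?thesis by simp
qed

lemma indicator_sums:
  assumes A: "range A \<subseteq> sets M" "disjoint_family A"
  shows "(\<lambda>i. l (indicator (A i))) sums l (indicator (\<Union>i. A i))"
proof -
  define B where "B n = (\<Union>i<n. A i)" for n
  have B: "B n \<in> sets M" for n using A unfolding B_def by auto
  have UA: "(\<Union>i. A i) \<in> sets M" using A by auto
  have B_sub: "B n \<subseteq> (\<Union>i. A i)" for n unfolding B_def by auto
  have partial: "l (indicator (B n)) = (\<Sum>i<n. l (indicator (A i)))" for n
  proof (induction n)
    case 0 then show ?case using zero by (simp add: B_def)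
  next
    case (Suc n)
    have "B (Suc n) - B n = A n"
      using A(2) unfolding B_def disjoint_family_on_def by (auto simp: lessThan_Suc) (metis disjoint_iff less_irrefl_nat)
    moreover have "B n \<subseteq> B (Suc n)" unfolding B_def by (auto simp: lessThan_Suc)
    ultimately have "l (indicator (A n)) = l (indicator (B (Suc n))) - l (indicator (B n))"
      using indicator_Diff[OF B B] by metis
    then show ?case using Suc by simp
  qed
  have mB: "(\<lambda>n. measure M (B n)) \<longlonglongrightarrow> measure M (\<Union>i. A i)"
  proof -
    have "incseq B" unfolding B_def incseq_def by (auto intro: order_less_le_trans)
    moreover have "(\<Union>n. B n) = (\<Union>i. A i)" unfolding B_def by auto
    ultimately show ?thesis using finite_Lim_measure_incseq[of B] B by auto
  qed
  have "(\<lambda>n. l (indicator (B n)) - l (indicator (\<Union>i. A i))) \<longlonglongrightarrow> 0"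
  proof (rule Lim_null_comparison[OF always_eventually])
    show "\<forall>n. norm (l (indicator (B n)) - l (indicator (\<Union>i. A i))) \<le> measure M (\<Union>i. A i) - measure M (B n)"
    proof
      fix n
      have "\<bar>l (indicator ((\<Union>i. A i) - B n))\<bar> \<le> measure M ((\<Union>i. A i) - B n)"
        using abs_indicator_le UA B by blast
      then show "norm (l (indicator (B n)) - l (indicator (\<Union>i. A i))) \<le> measure M (\<Union>i. A i) - measure M (B n)"
        unfolding indicator_Diff[OF UA B B_sub] finite_measure_Diff[OF UA B B_sub] by (simp add: abs_minus_commute)
    qed
    show "(\<lambda>n. measure M (\<Union>i. A i) - measure M (B n)) \<longlonglongrightarrow> 0"
      using tendsto_diff[OF tendsto_const mB, of "measure M (\<Union>i. A i)"] by simp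
  qed
  then show ?thesis unfolding sums_def partial[symmetric] by (simp add: LIM_zero_iff)
qed

lemma shifted_density:
  "\<exists>f\<in>borel_measurable M. \<forall>A\<in>sets M. emeasure (density M f) A = ennreal (l (indicator A) + measure M A)"
proof -
  define \<mu> where "\<mu> A = ennreal (l (indicator A) + measure M A)" for A
  have nonneg: "0 \<le> l (indicator A) + measure M A" if "A \<in> sets M" for A
    using abs_indicator_le[OF that] by linarith
  have ca: "countably_additive (sets M) \<mu>"
  proof (rule countably_additiveI)
    fix A :: "nat \<Rightarrow> 'a set" assume A: "range A \<subseteq> sets M" "disjoint_family A" "(\<Union>i. A i) \<in> sets M"
    have "(\<lambda>i. l (indicator (A i)) + measure M (A i)) sums (l (indicator (\<Union>i. A i)) + measure M (\<Union>i. A i))"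
      by (intro sums_add indicator_sums finite_measure_UNION A(1,2))
    then show "(\<Sum>i. \<mu> (A i)) = \<mu> (\<Union>i. A i)"
      unfolding \<mu>_def using nonneg A by (intro suminf_ennreal_eq) auto
  qed
  have "(indicator {} :: 'a \<Rightarrow> real) = (\<lambda>_. 0)" by (simp add: fun_eq_iff)
  then have pos: "positive (sets M) \<mu>"
    unfolding positive_def \<mu>_def using zero by simp
  define N where "N = measure_of (space M) (sets M) \<mu>"
  have eN: "emeasure N A = \<mu> A" if "A \<in> sets M" for A
    unfolding N_def by (rule emeasure_measure_of_sigma[OF sets.sigma_algebra_axioms pos ca that])
  have sN: "sets N = sets M" unfolding N_def by simp
  have "absolutely_continuous M N"
    unfolding absolutely_continuous_def
  proof
    fix A assume "A \<in> null_sets M"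
    then have A: "A \<in> sets M" "measure M A = 0" by (auto simp: null_sets_def measure_def)
    then have "l (indicator A) = 0" using abs_indicator_le[OF A(1)] by simp
    then show "A \<in> null_sets N" using A eN sN by (simp add: null_sets_def \<mu>_def)
  qed
  then obtain f where "f \<in> borel_measurable M" "density M f = N"
    using sigma_finite_measure.Radon_Nikodym[OF _ _ sN] sigma_finite_measure_axioms by blast
  then show ?thesis using eN \<mu>_def by auto
qed

text \<open>The density f of A \<mapsto> l(1_A) + M(A) lies in [0, 2], so X = f - 1 represents l on indicators.\<close>
lemma indicator_representation:
  "\<exists>X\<in>borel_measurable M. (\<forall>w. \<bar>X w\<bar> \<le> 1) \<and> (\<forall>A\<in>sets M. l (indicator A) = (\<integral>w. indicator A w * X w \<partial>M))"
proof -
  obtain f where f: "f \<in> borel_measurable M"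
    and fA: "\<And>A. A \<in> sets M \<Longrightarrow> emeasure (density M f) A = ennreal (l (indicator A) + measure M A)"
    using shifted_density by blast
  have f2: "AE x in M. f x \<le> 2"
  proof (rule AE_le_of_density_le[OF finite_measure_axioms f, of 2, simplified])
    fix A assume A: "A \<in> sets M"
    show "emeasure (density M f) A \<le> ennreal (2 * measure M A)"
      unfolding fA[OF A] using abs_indicator_le[OF A] by (intro ennreal_leI) linarith
  qed
  define X where "X w = max (-1) (min 1 (enn2real (f w) - 1))" for w
  have Xm: "X \<in> borel_measurable M" unfolding X_def using f by measurable
  have Xb: "\<bar>X w\<bar> \<le> 1" for w unfolding X_def by linarith
  have XAE: "AE w in M. X w = enn2real (f w) - 1"
    using f2 by (rule AE_mp) (intro AE_I2 impI, auto simp: X_def dest: enn2real_mono[of _ 2])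
  have "l (indicator A) = (\<integral>w. indicator A w * X w \<partial>M)" if A: "A \<in> sets M" for A
  proof -
    have fi: "integrable M (\<lambda>w. indicator A w * enn2real (f w))"
    proof (rule Bochner_Integration.integrable_bound[where f="\<lambda>w. 2::real"])
      show "(\<lambda>w. indicator A w * enn2real (f w)) \<in> borel_measurable M" using A f by measurable
      show "AE w in M. norm (indicator A w * enn2real (f w)) \<le> norm (2::real)"
        using f2 by (rule AE_mp) (intro AE_I2 impI, auto simp: indicator_def enn2real_leI)
    qed simp
    have "(\<integral>w. indicator A w * X w \<partial>M) = (\<integral>w. indicator A w * enn2real (f w) - indicator A w \<partial>M)"
    proof (rule integral_cong_AE)
      show "AE w in M. indicator A w * X w = indicator A w * enn2real (f w) - indicator A w"
        using XAE by (rule AE_mp) (intro AE_I2 impI, erule ssubst, simp add: right_diff_distrib)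
    qed (use Xm A f in auto)
    also have "\<dots> = (\<integral>w. indicator A w * enn2real (f w) \<partial>M) - measure M A"
      using fi integrable_indicator_set[OF A] A by (simp add: sets.Int_space_eq2)
    also have "(\<integral>w. indicator A w * enn2real (f w) \<partial>M) = enn2real (\<integral>\<^sup>+w. ennreal (indicator A w * enn2real (f w)) \<partial>M)"
      by (rule integral_eq_nn_integral) (use A f in auto)
    also have "(\<integral>\<^sup>+w. ennreal (indicator A w * enn2real (f w)) \<partial>M) = (\<integral>\<^sup>+w. f w * indicator A w \<partial>M)"
    proof (rule nn_integral_cong_AE)
      show "AE w in M. ennreal (indicator A w * enn2real (f w)) = f w * indicator A w"
        using f2
      proof (rule AE_mp, intro AE_I2 impI)
        fix w assume "f w \<le> 2"
        then have "f w < \<top>" by (rule le_less_trans) simp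
        then show "ennreal (indicator A w * enn2real (f w)) = f w * indicator A w"
          by (cases "w \<in> A") (simp_all add: ennreal_enn2real_if)
      qed
    qed
    also have "\<dots> = ennreal (l (indicator A) + measure M A)" using emeasure_density[OF f A] fA[OF A] by simp
    finally show ?thesis using abs_indicator_le[OF A] by simp
  qed
  with Xm Xb show ?thesis by blast
qed

lemma abs_diff_le:
  assumes "integrable M x" "integrable M y"
  shows "\<bar>l x - l y\<bar> \<le> (\<integral>w. \<bar>x w - y w\<bar> \<partial>M)"
proof -
  have my: "integrable M (\<lambda>w. (-1) * y w)" using assms by auto
  have "l (\<lambda>w. x w + (-1) * y w) = l x - l y"
    using additive[OF assms(1) my] homogeneous[OF assms(2), of "-1"] by simp
  moreover have "\<bar>l (\<lambda>w. x w + (-1) * y w)\<bar> \<le> L1_norm M (\<lambda>w. x w + (-1) * y w)"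
    using bounded assms(1) my by blast
  ultimately show ?thesis by (simp add: L1_norm_def)
qed

lemma representation:
  "\<exists>X\<in>borel_measurable M. (\<forall>w. \<bar>X w\<bar> \<le> 1) \<and> (\<forall>x. integrable M x \<longrightarrow> l x = (\<integral>w. x w * X w \<partial>M))"
proof -
  obtain X where Xm: "X \<in> borel_measurable M" and Xb: "\<And>w. \<bar>X w\<bar> \<le> 1"
    and ind: "\<And>A. A \<in> sets M \<Longrightarrow> l (indicator A) = (\<integral>w. indicator A w * X w \<partial>M)"
    using indicator_representation by blast
  have iX: "integrable M (\<lambda>w. x w * X w)" if "integrable M x" for x
    by (rule Bochner_Integration.integrable_bound[where f=x, OF that])
       (use Xm that Xb in \<open>auto simp: abs_mult intro!: mult_left_le\<close>)
  have "l x = (\<integral>w. x w * X w \<partial>M)" if "integrable M x" for x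
    using that
  proof (induct rule: integrable_induct)
    case (base A c)
    then have A: "A \<in> sets M" by simp
    have "l (\<lambda>x. indicator A x *\<^sub>R c) = c * l (indicator A)"
      using homogeneous[OF integrable_indicator_set[OF A]] by (simp add: mult.commute)
    also have "\<dots> = (\<integral>w. (indicator A w *\<^sub>R c) * X w \<partial>M)" by (simp add: ind[OF A] algebra_simps)
    finally show ?case .
  next
    case (add f g)
    then show ?case using additive iX by (simp add: distrib_right)
  next
    case (lim f s)
    have "(\<lambda>i. (\<integral>w. s i w * X w \<partial>M)) \<longlonglongrightarrow> (\<integral>w. f w * X w \<partial>M)"
    proof (rule integral_dominated_convergence[where w="\<lambda>x. 2 * norm (f x)"])
      show "AE x in M. norm (s i x * X x) \<le> 2 * norm (f x)" for i
        using lim(4) Xb by (intro AE_I2) (auto simp: abs_mult intro: order_trans[OF mult_left_le])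
    qed (use lim Xm in \<open>auto intro!: tendsto_mult\<close>)
    moreover have "(\<lambda>i. l (s i)) \<longlonglongrightarrow> l f"
    proof -
      have "(\<lambda>i. (\<integral>w. \<bar>s i w - f w\<bar> \<partial>M)) \<longlonglongrightarrow> (\<integral>w. 0 \<partial>M)"
      proof (rule integral_dominated_convergence[where w="\<lambda>x. 3 * norm (f x)"])
        show "AE x in M. (\<lambda>i. \<bar>s i x - f x\<bar>) \<longlonglongrightarrow> 0"
          using lim(3) by (intro AE_I2) (simp add: tendsto_rabs_zero_iff LIM_zero_iff)
        show "AE x in M. norm \<bar>s i x - f x\<bar> \<le> 3 * norm (f x)" for i
        proof (rule AE_I2)
          fix x assume "x \<in> space M"
          then show "norm \<bar>s i x - f x\<bar> \<le> 3 * norm (f x)" using lim(4)[of x i] by simp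
        qed
        show "(\<lambda>w. \<bar>s i w - f w\<bar>) \<in> borel_measurable M" for i using lim by measurable
        show "integrable M (\<lambda>x. 3 * norm (f x))" using lim by auto
      qed simp
      then have "(\<lambda>i. (\<integral>w. \<bar>s i w - f w\<bar> \<partial>M)) \<longlonglongrightarrow> 0" by simp
      moreover have "\<forall>i. norm (l (s i) - l f) \<le> (\<integral>w. \<bar>s i w - f w\<bar> \<partial>M)"
        using abs_diff_le[OF lim(1) lim(5)] by simp
      ultimately have "(\<lambda>i. l (s i) - l f) \<longlonglongrightarrow> 0"
        by (rule Lim_null_comparison[OF always_eventually, rotated])
      then show ?thesis by (simp add: LIM_zero_iff)
    qed
    ultimately show ?case using lim(2) by (simp add: LIMSEQ_unique)
  qed
  with Xm Xb show ?thesis by blast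
qed

end

text \<open>gauge x is the L1 distance from -x to the convex cone spanned by the d/2-neighbourhood of A.
  It is sublinear, at most the L1 norm, at least d at a0 and nonpositive on minus the cone, so a
  Hahn-Banach extension of it from the line through a0 separates A from 0.\<close>
locale L1_convex_apart =
  fixes M :: "'a measure" and A :: "('a \<Rightarrow> real) set" and d :: real and a0 :: "'a \<Rightarrow> real"
  assumes fm: "finite_measure M"
    and AV: "\<And>a. a \<in> A \<Longrightarrow> integrable M a"
    and Aconv: "\<And>a b u. a \<in> A \<Longrightarrow> b \<in> A \<Longrightarrow> 0 \<le> u \<Longrightarrow> u \<le> 1 \<Longrightarrow> (\<lambda>w. (1-u) * a w + u * b w) \<in> A"
    and a0: "a0 \<in> A" and dpos: "0 < d" and dist: "\<And>a. a \<in> A \<Longrightarrow> d \<le> L1_norm M a"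
begin

definition cone where "cone = {(\<lambda>w. t * (a w + y w)) | t a y. 0 \<le> t \<and> a \<in> A \<and> integrable M y \<and> L1_norm M y < d/2}"
definition integrable_funs where "integrable_funs = {x. integrable M x}"
definition gauge where "gauge x = Inf ((\<lambda>k. L1_norm M (\<lambda>w. x w + k w)) ` cone)"

lemma cone_I: "0 \<le> t \<Longrightarrow> a \<in> A \<Longrightarrow> integrable M y \<Longrightarrow> L1_norm M y < d/2 \<Longrightarrow> (\<lambda>w. t * (a w + y w)) \<in> cone"
  unfolding cone_def by blast

lemma cone_zero: "(\<lambda>_. 0) \<in> cone"
  using cone_I[OF order_refl a0, of "\<lambda>_. 0"] dpos by (simp add: L1_norm_def)

lemma cone_integrable: "k \<in> cone \<Longrightarrow> integrable M k"
  unfolding cone_def using AV by auto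

lemma cone_scale: assumes "k \<in> cone" "0 \<le> c" shows "(\<lambda>w. c * k w) \<in> cone"
proof -
  obtain t a y where h: "k = (\<lambda>w. t * (a w + y w))" "0 \<le> t" "a \<in> A" "integrable M y" "L1_norm M y < d/2"
    using assms(1) unfolding cone_def by blast
  have "(\<lambda>w. (c*t) * (a w + y w)) \<in> cone" by (rule cone_I) (use h assms in auto)
  then show ?thesis using h by (simp add: mult.assoc)
qed

lemma cone_add: assumes "k1 \<in> cone" "k2 \<in> cone" shows "(\<lambda>w. k1 w + k2 w) \<in> cone"
proof -
  obtain t1 a1 y1 where h1: "k1 = (\<lambda>w. t1 * (a1 w + y1 w))" "0 \<le> t1" "a1 \<in> A" "integrable M y1" "L1_norm M y1 < d/2"
    using assms(1) unfolding cone_def by blast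
  obtain t2 a2 y2 where h2: "k2 = (\<lambda>w. t2 * (a2 w + y2 w))" "0 \<le> t2" "a2 \<in> A" "integrable M y2" "L1_norm M y2 < d/2"
    using assms(2) unfolding cone_def by blast
  show ?thesis
  proof (cases "t1 + t2 = 0")
    case True
    then have "t1 = 0" "t2 = 0" using h1 h2 by auto
    then show ?thesis using cone_zero h1 h2 by simp
  next
    case False
    define s where "s = t1 + t2"
    have s: "0 < s" using False h1 h2 s_def by simp
    define u where "u = t2 / s"
    have u: "0 \<le> u" "u \<le> 1" "1 - u = t1 / s" using s h1 h2 by (auto simp: u_def s_def field_simps)
    define y where "y = (\<lambda>w. (1-u) * y1 w + u * y2 w)"
    have yi: "integrable M y" unfolding y_def using h1 h2 by auto
    have "L1_norm M y \<le> L1_norm M (\<lambda>w. (1-u) * y1 w) + L1_norm M (\<lambda>w. u * y2 w)"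
      unfolding y_def by (rule L1_norm_triangle) (use h1 h2 in auto)
    also have "\<dots> = (1-u) * L1_norm M y1 + u * L1_norm M y2" unfolding L1_norm_scale using u(1,2) by simp
    also have "\<dots> < (1-u) * (d/2) + u * (d/2)"
    proof (cases "u = 0")
      case True then show ?thesis using h1 by simp
    next
      case False
      then have "u * L1_norm M y2 < u * (d/2)" using u h2 by simp
      moreover have "(1-u) * L1_norm M y1 \<le> (1-u) * (d/2)" using u h1 by (intro mult_left_mono) auto
      ultimately show ?thesis by simp
    qed
    also have "(1-u) * (d/2) + u * (d/2) = ((1-u) + u) * (d/2)" by (rule distrib_right[symmetric])
    also have "\<dots> = d/2" by simp
    finally have yN: "L1_norm M y < d/2" .
    have aA: "(\<lambda>w. (1-u) * a1 w + u * a2 w) \<in> A" using Aconv[OF h1(3) h2(3) u(1,2)] .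
    have "(\<lambda>w. s * ((\<lambda>w. (1-u) * a1 w + u * a2 w) w + y w)) \<in> cone" by (rule cone_I) (use s aA yi yN in auto)
    moreover have "(\<lambda>w. s * ((\<lambda>w. (1-u) * a1 w + u * a2 w) w + y w)) = (\<lambda>w. k1 w + k2 w)"
    proof
      fix w
      have e: "s * (1-u) = t1" "s * u = t2" using s u(3) by (auto simp: u_def)
      have "s * ((1-u)*a1 w + u*a2 w + ((1-u)*y1 w + u*y2 w)) = (s*(1-u))*(a1 w + y1 w) + (s*u)*(a2 w + y2 w)"
        by (simp add: algebra_simps)
      then show "s * ((\<lambda>w. (1-u) * a1 w + u * a2 w) w + y w) = k1 w + k2 w"
        unfolding h1 h2 y_def using e by simp
    qed
    ultimately show ?thesis by simp
  qed
qed

lemma gauge_bdd: "bdd_below ((\<lambda>k. L1_norm M (\<lambda>w. x w + k w)) ` cone)"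
  by (rule bdd_belowI[of _ 0]) (auto simp: L1_norm_nonneg)

lemma gauge_le: "k \<in> cone \<Longrightarrow> gauge x \<le> L1_norm M (\<lambda>w. x w + k w)"
  unfolding gauge_def by (rule cInf_lower[OF _ gauge_bdd]) auto

lemma gauge_greatest: "(\<And>k. k \<in> cone \<Longrightarrow> c \<le> L1_norm M (\<lambda>w. x w + k w)) \<Longrightarrow> c \<le> gauge x"
  unfolding gauge_def by (rule cInf_greatest) (use cone_zero in auto)

lemma gauge_nonneg: "0 \<le> gauge x" by (rule gauge_greatest) (simp add: L1_norm_nonneg)

lemma gauge_le_L1_norm: "gauge x \<le> L1_norm M x" using gauge_le[OF cone_zero] by simp

lemma gauge_add: assumes "integrable M x" "integrable M y"
  shows "gauge (\<lambda>w. x w + y w) \<le> gauge x + gauge y"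
proof -
  have "gauge (\<lambda>w. x w + y w) - L1_norm M (\<lambda>w. y w + k2 w) \<le> gauge x" if k2: "k2 \<in> cone" for k2
  proof (rule gauge_greatest)
    fix k1 assume k1: "k1 \<in> cone"
    have "gauge (\<lambda>w. x w + y w) \<le> L1_norm M (\<lambda>w. (x w + y w) + (k1 w + k2 w))" using gauge_le[OF cone_add[OF k1 k2]] by simp
    also have "(\<lambda>w. (x w + y w) + (k1 w + k2 w)) = (\<lambda>w. (\<lambda>w. x w + k1 w) w + (\<lambda>w. y w + k2 w) w)" by (auto simp: algebra_simps)
    also have "L1_norm M \<dots> \<le> L1_norm M (\<lambda>w. x w + k1 w) + L1_norm M (\<lambda>w. y w + k2 w)"
      by (rule L1_norm_triangle) (use assms cone_integrable k1 k2 in auto)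
    finally show "gauge (\<lambda>w. x w + y w) - L1_norm M (\<lambda>w. y w + k2 w) \<le> L1_norm M (\<lambda>w. x w + k1 w)" by simp
  qed
  then have "gauge (\<lambda>w. x w + y w) - gauge x \<le> gauge y"
    by (intro gauge_greatest) (smt (verit))
  then show ?thesis by simp
qed

lemma gauge_scale: assumes "0 \<le> c" shows "gauge (\<lambda>w. c * x w) = c * gauge x"
proof (cases "c = 0")
  case True
  have "gauge (\<lambda>_. 0) \<le> 0" using gauge_le[OF cone_zero, of "\<lambda>_. 0"] by (simp add: L1_norm_def)
  then show ?thesis using True gauge_nonneg[of "\<lambda>_. 0"] by simp
next
  case False
  then have c: "0 < c" using assms by simp
  have 1: "c * gauge x \<le> gauge (\<lambda>w. c * x w)"
  proof (rule gauge_greatest)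
    fix k assume k: "k \<in> cone"
    have k': "(\<lambda>w. (1/c) * k w) \<in> cone" using cone_scale[OF k, of "1/c"] c by simp
    have "(\<lambda>w. c * x w + k w) = (\<lambda>w. c * (x w + (1/c) * k w))" using c by (auto simp: field_simps)
    then have "L1_norm M (\<lambda>w. c * x w + k w) = c * L1_norm M (\<lambda>w. x w + (1/c) * k w)" using c by (simp add: L1_norm_scale)
    moreover have "gauge x \<le> L1_norm M (\<lambda>w. x w + (1/c) * k w)" using gauge_le[OF k'] by simp
    ultimately show "c * gauge x \<le> L1_norm M (\<lambda>w. c * x w + k w)" using c by simp
  qed
  have "gauge (\<lambda>w. c * x w) / c \<le> gauge x"
  proof (rule gauge_greatest)
    fix k assume k: "k \<in> cone"
    have "gauge (\<lambda>w. c * x w) \<le> L1_norm M (\<lambda>w. c * x w + c * k w)" using gauge_le[OF cone_scale[OF k assms]] by simp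
    also have "L1_norm M (\<lambda>w. c * x w + c * k w) = L1_norm M (\<lambda>w. c * (x w + k w))"
      by (rule arg_cong[where f="L1_norm M"]) (auto simp: algebra_simps)
    also have "\<dots> = c * L1_norm M (\<lambda>w. x w + k w)" unfolding L1_norm_scale using c by simp
    finally show "gauge (\<lambda>w. c * x w) / c \<le> L1_norm M (\<lambda>w. x w + k w)" using c by (simp add: field_simps)
  qed
  then have "gauge (\<lambda>w. c * x w) \<le> c * gauge x" using c by (simp add: field_simps)
  then show ?thesis using 1 by simp
qed

lemma sublinear_gauge: "sublinear_on integrable_funs gauge"
  unfolding sublinear_on_def integrable_funs_def using gauge_add gauge_scale by auto

lemma gauge_base_point: "d \<le> gauge a0"
proof (rule gauge_greatest)
  fix k assume "k \<in> cone"
  then obtain t a y where h: "k = (\<lambda>w. t * (a w + y w))" "0 \<le> t" "a \<in> A" "integrable M y" "L1_norm M y < d/2"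
    unfolding cone_def by blast
  define u where "u = t / (1 + t)"
  have u: "0 \<le> u" "u \<le> 1" "1 - u = 1 / (1+t)" using h(2) by (auto simp: u_def field_simps)
  have aA: "(\<lambda>w. (1-u) * a0 w + u * a w) \<in> A" using Aconv[OF a0 h(3) u(1,2)] .
  have e1: "(1+t)*(1-u) = 1" "(1+t)*u = t" using h(2) by (auto simp: u(3) u_def field_simps)
  have eq: "(\<lambda>w. a0 w + t * a w) = (\<lambda>w. (1+t) * ((\<lambda>w. (1-u) * a0 w + u * a w) w))"
  proof
    fix w
    have "(1+t) * ((1-u) * a0 w + u * a w) = ((1+t)*(1-u)) * a0 w + ((1+t)*u) * a w" by (simp add: algebra_simps)
    then show "a0 w + t * a w = (1+t) * ((\<lambda>w. (1-u) * a0 w + u * a w) w)" using e1 by simp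
  qed
  have "L1_norm M (\<lambda>w. a0 w + t * a w) = (1+t) * L1_norm M (\<lambda>w. (1-u) * a0 w + u * a w)"
    unfolding eq L1_norm_scale using h(2) by simp
  also have "\<dots> \<ge> (1+t) * d" using dist[OF aA] h(2) by (intro mult_left_mono) auto
  finally have 1: "(1+t) * d \<le> L1_norm M (\<lambda>w. a0 w + t * a w)" .
  have "L1_norm M (\<lambda>w. a0 w + t * a w) - L1_norm M (\<lambda>w. t * y w) \<le> L1_norm M (\<lambda>w. (\<lambda>w. a0 w + t * a w) w + (\<lambda>w. t * y w) w)"
    by (rule L1_norm_reverse_triangle) (use AV a0 h in auto)
  moreover have "L1_norm M (\<lambda>w. t * y w) = t * L1_norm M y" using h(2) by (simp add: L1_norm_scale)
  moreover have "t * L1_norm M y \<le> t * (d/2)" using h by (intro mult_left_mono) auto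
  moreover have "(\<lambda>w. (\<lambda>w. a0 w + t * a w) w + (\<lambda>w. t * y w) w) = (\<lambda>w. a0 w + k w)"
    unfolding h(1) by (auto simp: algebra_simps)
  ultimately have "L1_norm M (\<lambda>w. a0 w + t * a w) - t * (d/2) \<le> L1_norm M (\<lambda>w. a0 w + k w)" by simp
  then have "(1+t)*d - t * (d/2) \<le> L1_norm M (\<lambda>w. a0 w + k w)" using 1 by linarith
  moreover have "(1+t)*d - t*(d/2) = d + (t*d)/2" by (simp add: field_simps)
  moreover have "0 \<le> t * d" using h(2) dpos by simp
  ultimately show "d \<le> L1_norm M (\<lambda>w. a0 w + k w)" by linarith
qed

lemma gauge_neg_cone: assumes "a \<in> A" "integrable M y" "L1_norm M y < d/2"
  shows "gauge (\<lambda>w. (-1) * (a w + y w)) \<le> 0"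
  using gauge_le[OF cone_I[OF _ assms, of 1], of "\<lambda>w. (-1) * (a w + y w)"] by (simp add: L1_norm_def)

lemma separation:
  "\<exists>X\<in>borel_measurable M. (\<forall>w. \<bar>X w\<bar> \<le> 1) \<and> (\<exists>\<eta>>0. \<forall>a\<in>A. \<eta> \<le> (\<integral>w. a w * X w \<partial>M))"
proof -
  have a0V: "a0 \<in> integrable_funs" using AV a0 by (simp add: integrable_funs_def)
  obtain l where ladd: "\<And>x y. x\<in>integrable_funs \<Longrightarrow> y\<in>integrable_funs \<Longrightarrow> l (\<lambda>w. x w + y w) = l x + l y"
    and lsc: "\<And>x c. x\<in>integrable_funs \<Longrightarrow> l (\<lambda>w. c * x w) = c * l x"
    and lp: "\<And>x. x\<in>integrable_funs \<Longrightarrow> l x \<le> gauge x" and la0: "l a0 = gauge a0"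
    using hahn_banach_sublinear[OF sublinear_gauge a0V] by blast
  have lb: "\<bar>l x\<bar> \<le> L1_norm M x" if "integrable M x" for x
  proof -
    have xV: "x \<in> integrable_funs" "(\<lambda>w. (-1) * x w) \<in> integrable_funs" using that by (auto simp: integrable_funs_def)
    have "l x \<le> L1_norm M x" using lp[OF xV(1)] gauge_le_L1_norm[of x] by simp
    moreover have "- l x \<le> L1_norm M x" using lp[OF xV(2)] gauge_le_L1_norm[of "\<lambda>w. (-1) * x w"] lsc[OF xV(1), of "-1"] by simp
    ultimately show ?thesis by simp
  qed
  obtain X where X: "X \<in> borel_measurable M" "\<And>w. \<bar>X w\<bar> \<le> 1" "\<And>x. integrable M x \<Longrightarrow> l x = (\<integral>w. x w * X w \<partial>M)"
    using L1_bounded_functional.representation[of M l] fm ladd lsc lb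
    by (auto simp: integrable_funs_def L1_bounded_functional_def L1_bounded_functional_axioms_def)
  have Na0: "d \<le> L1_norm M a0" using dist[OF a0] .
  define s where "s = d / (4 * L1_norm M a0)"
  have s: "0 < s" using Na0 dpos by (simp add: s_def)
  have la0d: "d \<le> l a0" using la0 gauge_base_point by simp
  \<comment> \<open>a - s a0 lies in the cone, and l \<le> gauge \<le> 0 on minus the cone, so l a \<ge> s * l a0.\<close>
  have "s * d \<le> l a" if aA: "a \<in> A" for a
  proof -
    define y where "y = (\<lambda>w. (-s) * a0 w)"
    have yV: "integrable M y" unfolding y_def using AV[OF a0] by simp
    have "L1_norm M y = s * L1_norm M a0" unfolding y_def L1_norm_scale using s by simp
    also have "\<dots> = d/4" using Na0 dpos by (simp add: s_def)
    finally have yN: "L1_norm M y < d/2" using dpos by simp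
    have aV: "a \<in> integrable_funs" "y \<in> integrable_funs" using AV[OF aA] yV by (auto simp: integrable_funs_def)
    have sV: "(\<lambda>w. a w + y w) \<in> integrable_funs" using aV by (auto simp: integrable_funs_def)
    have "(\<lambda>w. (-1) * (a w + y w)) \<in> integrable_funs" using sV unfolding integrable_funs_def mem_Collect_eq by (rule integrable_mult_right)
    then have "l (\<lambda>w. (-1) * (a w + y w)) \<le> 0" using lp[of "\<lambda>w. (-1) * (a w + y w)"] gauge_neg_cone[OF aA yV yN]
      by linarith
    then have "- (l a + l y) \<le> 0" using lsc[OF sV, of "-1"] ladd[OF aV] by simp
    moreover have "l y = - s * l a0" unfolding y_def using lsc[OF a0V, of "-s"] by simp
    moreover have "s * d \<le> s * l a0" using la0d s by simp
    ultimately show ?thesis by simp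
  qed
  then show ?thesis using X s dpos
    by (intro bexI[of _ X] conjI exI[of _ "s*d"]) (auto simp: AV)
qed

end

lemma L1_convex_separation:
  assumes "finite_measure M" and "\<And>a. a \<in> A \<Longrightarrow> integrable M a"
    and "\<And>a b u. a \<in> A \<Longrightarrow> b \<in> A \<Longrightarrow> 0 \<le> u \<Longrightarrow> u \<le> 1 \<Longrightarrow> (\<lambda>w. (1-u) * a w + u * b w) \<in> A"
    and "A \<noteq> {}" and "0 < d" and "\<And>a. a \<in> A \<Longrightarrow> d \<le> L1_norm M a"
  shows "\<exists>X\<in>borel_measurable M. (\<forall>w. \<bar>X w\<bar> \<le> 1) \<and> (\<exists>\<eta>>0. \<forall>a\<in>A. \<eta> \<le> (\<integral>w. a w * X w \<partial>M))"
proof -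
  obtain a0 where "a0 \<in> A" using assms(4) by blast
  then interpret L1_convex_apart M A d a0
    by (intro L1_convex_apart.intro) (use assms in auto)
  show ?thesis by (rule separation)
qed

lemma real_density_exists:
  assumes P: "prob_space P" and Q: "prob_space Q" "sets Q = sets P" "absolutely_continuous P Q"
  shows "\<exists>h. h \<in> borel_measurable P \<and> (\<forall>x. 0 \<le> h x) \<and> Q = density P (\<lambda>x. ennreal (h x))"
proof -
  interpret prob_space P by fact
  obtain f where f: "f \<in> borel_measurable P" "density P f = Q"
    using Radon_Nikodym[OF Q(3) Q(2)] by blast
  have "integral\<^sup>N P f = emeasure (density P f) (space P)"
    using f(1) by (simp add: emeasure_density)
  also have "\<dots> = 1" using f(2) Q prob_space.emeasure_space_1 by (metis sets_eq_imp_space_eq)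
  finally have "integral\<^sup>N P f \<noteq> \<infinity>" by simp
  from nn_integral_PInf_AE[OF f(1) this] have fin: "AE x in P. f x \<noteq> \<infinity>" .
  have "density P (\<lambda>x. ennreal (enn2real (f x))) = density P f"
    by (rule density_cong) (use f(1) fin in \<open>auto simp: ennreal_enn2real_if\<close>)
  then show ?thesis using f by (intro exI[of _ "\<lambda>x. enn2real (f x)"]) auto
qed

lemma integrable_real_density:
  assumes h: "h \<in> borel_measurable P" "\<And>x. 0 \<le> h x" and pr: "prob_space (density P (\<lambda>x. ennreal (h x)))"
  shows "integrable P h"
proof -
  have "(\<integral>\<^sup>+x. ennreal (h x) \<partial>P) = emeasure (density P (\<lambda>x. ennreal (h x))) (space P)"
    using h by (simp add: emeasure_density)
  also have "\<dots> = 1" using prob_space.emeasure_space_1[OF pr] by simp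
  finally show ?thesis by (intro integrableI_nonneg) (use h in auto)
qed

lemma integral_real_density:
  assumes h: "h \<in> borel_measurable P" "\<And>x. 0 \<le> h x" and Z: "Z \<in> borel_measurable P"
  shows "(\<integral>x. Z x \<partial>density P (\<lambda>x. ennreal (h x))) = (\<integral>x. h x * Z x \<partial>P)"
  using integral_density[OF Z h(1)] h(2) by simp

lemma integral_density_le_L1_dist:
  fixes Z :: "'a \<Rightarrow> real"
  assumes h1: "h1 \<in> borel_measurable P" "\<And>x. 0 \<le> h1 x" "integrable P h1"
    and h2: "h2 \<in> borel_measurable P" "\<And>x. 0 \<le> h2 x" "integrable P h2"
    and Zb: "\<And>x. \<bar>Z x\<bar> \<le> c"
  shows "(\<integral>x. Z x \<partial>density P (\<lambda>x. ennreal (h1 x))) \<le> (\<integral>x. Z x \<partial>density P (\<lambda>x. ennreal (h2 x))) + c * (\<integral>x. \<bar>h1 x - h2 x\<bar> \<partial>P)"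
proof (cases "Z \<in> borel_measurable P")
  case False
  then have "\<not> integrable (density P (\<lambda>x. ennreal (h1 x))) Z" "\<not> integrable (density P (\<lambda>x. ennreal (h2 x))) Z"
    by (auto dest: borel_measurable_integrable)
  moreover have "0 \<le> c" using Zb[of undefined] by simp
  ultimately show ?thesis by (simp add: not_integrable_integral_eq)
next
  case True
  have pw: "hh x * \<bar>Z x\<bar> \<le> \<bar>c\<bar> * hh x" if "0 \<le> hh x" for hh x
  proof -
    have "hh x * \<bar>Z x\<bar> \<le> hh x * c" using Zb[of x] that by (intro mult_left_mono) auto
    also have "\<dots> \<le> \<bar>c\<bar> * hh x" using that by (simp add: mult.commute mult_right_mono)
    finally show ?thesis .
  qed
  have i1: "integrable P (\<lambda>x. h1 x * Z x)"
    by (rule Bochner_Integration.integrable_bound[where f="\<lambda>x. c * h1 x"]) (use h1 True pw in \<open>auto simp: abs_mult\<close>)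
  have i2: "integrable P (\<lambda>x. h2 x * Z x)"
    by (rule Bochner_Integration.integrable_bound[where f="\<lambda>x. c * h2 x"]) (use h2 True pw in \<open>auto simp: abs_mult\<close>)
  have i3: "integrable P (\<lambda>x. c * \<bar>h1 x - h2 x\<bar>)" using h1 h2 by auto
  have "(\<integral>x. h1 x * Z x \<partial>P) \<le> (\<integral>x. h2 x * Z x + c * \<bar>h1 x - h2 x\<bar> \<partial>P)"
  proof (rule integral_mono)
    show "integrable P (\<lambda>x. h2 x * Z x + c * \<bar>h1 x - h2 x\<bar>)" using i2 i3 by auto
    fix x
    have "h1 x * Z x - h2 x * Z x = (h1 x - h2 x) * Z x" by (simp add: algebra_simps)
    also have "\<dots> \<le> \<bar>h1 x - h2 x\<bar> * \<bar>Z x\<bar>" by (metis abs_ge_self abs_mult)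
    also have "\<dots> \<le> \<bar>h1 x - h2 x\<bar> * c" using Zb[of x] by (intro mult_left_mono) auto
    finally show "h1 x * Z x \<le> h2 x * Z x + c * \<bar>h1 x - h2 x\<bar>" by (simp add: algebra_simps)
  qed (use i1 in auto)
  also have "\<dots> = (\<integral>x. h2 x * Z x \<partial>P) + c * (\<integral>x. \<bar>h1 x - h2 x\<bar> \<partial>P)"
    using i2 i3 by simp
  finally show ?thesis using integral_real_density[OF h1(1,2) True] integral_real_density[OF h2(1,2) True] by simp
qed

lemma density_convex_sum:
  assumes I: "finite I" and w: "\<And>q. q \<in> I \<Longrightarrow> 0 \<le> w q"
    and hq: "\<And>q. q \<in> I \<Longrightarrow> hq q \<in> borel_measurable P \<and> (\<forall>x. 0 \<le> hq q x) \<and> q = density P (\<lambda>x. ennreal (hq q x))"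
    and Q: "sets Q = sets P" "\<And>A. A \<in> sets P \<Longrightarrow> emeasure Q A = (\<Sum>q\<in>I. ennreal (w q) * emeasure q A)"
  shows "Q = density P (\<lambda>x. ennreal (\<Sum>q\<in>I. w q * hq q x))"
proof (rule measure_eqI)
  show "sets Q = sets (density P (\<lambda>x. ennreal (\<Sum>q\<in>I. w q * hq q x)))" using Q by simp
  fix A assume "A \<in> sets Q"
  then have A: "A \<in> sets P" using Q by simp
  have m: "\<And>q. q \<in> I \<Longrightarrow> hq q \<in> borel_measurable P" using hq by blast
  have "emeasure (density P (\<lambda>x. ennreal (\<Sum>q\<in>I. w q * hq q x))) A
      = (\<integral>\<^sup>+x. ennreal (\<Sum>q\<in>I. w q * hq q x) * indicator A x \<partial>P)"
    by (rule emeasure_density) (use A I m in auto)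
  also have "\<dots> = (\<integral>\<^sup>+x. (\<Sum>q\<in>I. ennreal (w q) * (ennreal (hq q x) * indicator A x)) \<partial>P)"
  proof (rule nn_integral_cong)
    fix x
    have "ennreal (\<Sum>q\<in>I. w q * hq q x) = (\<Sum>q\<in>I. ennreal (w q * hq q x))"
      using w hq by (intro sum_ennreal[symmetric]) auto
    also have "\<dots> = (\<Sum>q\<in>I. ennreal (w q) * ennreal (hq q x))"
      using w hq by (intro sum.cong refl) (auto simp: ennreal_mult)
    finally show "ennreal (\<Sum>q\<in>I. w q * hq q x) * indicator A x = (\<Sum>q\<in>I. ennreal (w q) * (ennreal (hq q x) * indicator A x))"
      by (simp add: sum_distrib_right mult.assoc)
  qed
  also have "\<dots> = (\<Sum>q\<in>I. (\<integral>\<^sup>+x. ennreal (w q) * (ennreal (hq q x) * indicator A x) \<partial>P))"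
    by (rule nn_integral_sum) (use A m in auto)
  also have "\<dots> = (\<Sum>q\<in>I. ennreal (w q) * emeasure q A)"
  proof (rule sum.cong[OF refl])
    fix q assume q: "q \<in> I"
    have "(\<integral>\<^sup>+x. ennreal (w q) * (ennreal (hq q x) * indicator A x) \<partial>P) = ennreal (w q) * (\<integral>\<^sup>+x. ennreal (hq q x) * indicator A x \<partial>P)"
      by (rule nn_integral_cmult) (use A m q in auto)
    also have "(\<integral>\<^sup>+x. ennreal (hq q x) * indicator A x \<partial>P) = emeasure q A"
      using hq[OF q] A by (metis emeasure_density measurable_compose[OF _ measurable_ennreal])
    finally show "(\<integral>\<^sup>+x. ennreal (w q) * (ennreal (hq q x) * indicator A x) \<partial>P) = ennreal (w q) * emeasure q A" .
  qed
  also have "\<dots> = emeasure Q A" using Q(2)[OF A] by simp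
  finally show "emeasure Q A = emeasure (density P (\<lambda>x. ennreal (\<Sum>q\<in>I. w q * hq q x))) A" by simp
qed

lemma emeasure_density_convex:
  assumes h1: "h1 \<in> borel_measurable P" "\<And>x. 0 \<le> h1 x" and h2: "h2 \<in> borel_measurable P" "\<And>x. 0 \<le> h2 x"
    and u: "0 \<le> u" "u \<le> 1" and A: "A \<in> sets P"
  shows "emeasure (density P (\<lambda>x. ennreal ((1-u) * h1 x + u * h2 x))) A
     = ennreal (1-u) * emeasure (density P (\<lambda>x. ennreal (h1 x))) A + ennreal u * emeasure (density P (\<lambda>x. ennreal (h2 x))) A"
proof -
  have "emeasure (density P (\<lambda>x. ennreal ((1-u) * h1 x + u * h2 x))) A
      = (\<integral>\<^sup>+x. ennreal ((1-u) * h1 x + u * h2 x) * indicator A x \<partial>P)"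
    by (rule emeasure_density) (use h1 h2 A in auto)
  also have "\<dots> = (\<integral>\<^sup>+x. ennreal (1-u) * (ennreal (h1 x) * indicator A x) + ennreal u * (ennreal (h2 x) * indicator A x) \<partial>P)"
  proof (rule nn_integral_cong)
    fix x
    have "ennreal ((1-u) * h1 x + u * h2 x) = ennreal ((1-u) * h1 x) + ennreal (u * h2 x)"
      by (rule ennreal_plus) (use u h1 h2 in auto)
    also have "\<dots> = ennreal (1-u) * ennreal (h1 x) + ennreal u * ennreal (h2 x)"
      using u h1(2)[of x] h2(2)[of x] by (simp add: ennreal_mult)
    finally show "ennreal ((1-u) * h1 x + u * h2 x) * indicator A x = ennreal (1-u) * (ennreal (h1 x) * indicator A x) + ennreal u * (ennreal (h2 x) * indicator A x)"
      by (simp add: distrib_right mult.assoc)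
  qed
  also have "\<dots> = (\<integral>\<^sup>+x. ennreal (1-u) * (ennreal (h1 x) * indicator A x) \<partial>P) + (\<integral>\<^sup>+x. ennreal u * (ennreal (h2 x) * indicator A x) \<partial>P)"
    by (rule nn_integral_add) (use h1 h2 A in auto)
  also have "\<dots> = ennreal (1-u) * (\<integral>\<^sup>+x. ennreal (h1 x) * indicator A x \<partial>P) + ennreal u * (\<integral>\<^sup>+x. ennreal (h2 x) * indicator A x \<partial>P)"
    using h1 h2 A by (simp add: nn_integral_cmult)
  also have "\<dots> = ennreal (1-u) * emeasure (density P (\<lambda>x. ennreal (h1 x))) A + ennreal u * emeasure (density P (\<lambda>x. ennreal (h2 x))) A"
    using h1 h2 A by (simp add: emeasure_density)
  finally show ?thesis .
qed

lemma co_meas_singleton: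
  assumes adm: "admissible_Qs P Qs" and q: "q \<in> Qs"
  shows "q \<in> co_meas P Qs"
  unfolding co_meas_def using adm q unfolding admissible_Qs_def
  by (intro CollectI conjI exI[of _ "{q}"] exI[of _ "\<lambda>_. 1"]) auto

lemma co_meas_prob_space:
  assumes adm: "admissible_Qs P Qs" and Q: "Q \<in> co_meas P Qs"
  shows "prob_space Q"
proof (rule prob_spaceI)
  obtain I w where I: "I \<subseteq> Qs" "\<And>q. q\<in>I \<Longrightarrow> 0 \<le> w q" "sum w I = 1"
    "\<And>A. A\<in>sets P \<Longrightarrow> emeasure Q A = (\<Sum>q\<in>I. ennreal (w q) * emeasure q A)" and sQ: "sets Q = sets P"
    using Q unfolding co_meas_def by blast
  have "emeasure Q (space Q) = (\<Sum>q\<in>I. ennreal (w q) * emeasure q (space P))"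
    using I(4)[of "space P"] sets_eq_imp_space_eq[OF sQ] by simp
  also have "\<dots> = (\<Sum>q\<in>I. ennreal (w q))"
  proof (rule sum.cong[OF refl])
    fix q assume "q \<in> I"
    then have "prob_space q" "sets q = sets P" using adm I(1) unfolding admissible_Qs_def by auto
    then have "emeasure q (space P) = 1" by (metis prob_space.emeasure_space_1 sets_eq_imp_space_eq)
    then show "ennreal (w q) * emeasure q (space P) = ennreal (w q)" by simp
  qed
  also have "\<dots> = 1" using I(2,3) by simp
  finally show "emeasure Q (space Q) = 1" .
qed

lemma integral_mixture:
  assumes P: "prob_space P" and I: "finite I"
    and Iq: "\<And>q. q \<in> I \<Longrightarrow> prob_space q \<and> sets q = sets P \<and> absolutely_continuous P q"
    and w: "\<And>q. q \<in> I \<Longrightarrow> 0 \<le> w q"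
    and Q: "sets Q = sets P" "\<And>A. A \<in> sets P \<Longrightarrow> emeasure Q A = (\<Sum>q\<in>I. ennreal (w q) * emeasure q A)"
    and Xm: "X \<in> borel_measurable P" and Xi: "\<And>q. q \<in> I \<Longrightarrow> integrable q X"
  shows "integrable Q X" "(\<integral>x. X x \<partial>Q) = (\<Sum>q\<in>I. w q * (\<integral>x. X x \<partial>q))"
proof -
  have "\<forall>q\<in>I. \<exists>h. h \<in> borel_measurable P \<and> (\<forall>x. 0 \<le> h x) \<and> q = density P (\<lambda>x. ennreal (h x))"
    using real_density_exists[OF P] Iq by blast
  then obtain hq where hq: "\<And>q. q \<in> I \<Longrightarrow> hq q \<in> borel_measurable P \<and> (\<forall>x. 0 \<le> hq q x) \<and> q = density P (\<lambda>x. ennreal (hq q x))"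
    by metis
  define H where "H x = (\<Sum>q\<in>I. w q * hq q x)" for x
  have QH: "Q = density P (\<lambda>x. ennreal (H x))"
    unfolding H_def by (rule density_convex_sum[OF I w hq Q])
  have Hm: "H \<in> borel_measurable P" unfolding H_def using hq by (intro borel_measurable_sum borel_measurable_times) auto
  have Hn: "0 \<le> H x" for x unfolding H_def using hq w by (intro sum_nonneg) auto
  have iq: "integrable P (\<lambda>x. hq q x * X x)" if "q \<in> I" for q
    using Xi[OF that] integrable_density[OF Xm, of "hq q"] hq[OF that] by simp
  have eqH: "(\<lambda>x. H x * X x) = (\<lambda>x. \<Sum>q\<in>I. w q * (hq q x * X x))"
    unfolding H_def by (auto simp: sum_distrib_right mult.assoc)
  have iH: "integrable P (\<lambda>x. H x * X x)" unfolding eqH using iq by auto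
  show "integrable Q X" unfolding QH using integrable_density[OF Xm Hm] iH Hn by simp
  have "(\<integral>x. X x \<partial>Q) = (\<integral>x. H x * X x \<partial>P)" unfolding QH using integral_real_density[OF Hm Hn Xm] .
  also have "\<dots> = (\<Sum>q\<in>I. w q * (\<integral>x. hq q x * X x \<partial>P))" unfolding eqH using iq by simp
  also have "\<dots> = (\<Sum>q\<in>I. w q * (\<integral>x. X x \<partial>q))"
    using hq integral_real_density[OF _ _ Xm] by (intro sum.cong refl) metis
  finally show "(\<integral>x. X x \<partial>Q) = (\<Sum>q\<in>I. w q * (\<integral>x. X x \<partial>q))" .
qed

lemma co_meas_integral_le_rhoQ:
  assumes P: "prob_space P" and adm: "admissible_Qs P Qs" and Q: "Q \<in> co_meas P Qs"
    and Xm: "X \<in> borel_measurable P" and Xi: "\<And>q. q \<in> Qs \<Longrightarrow> integrable q X"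
  shows "integrable Q X" "ereal (\<integral>x. X x \<partial>Q) \<le> rhoQ Qs X"
proof -
  obtain I w where I: "finite I" "I \<noteq> {}" "I \<subseteq> Qs" "\<And>q. q\<in>I \<Longrightarrow> 0 \<le> w q" "sum w I = 1"
    "\<And>A. A\<in>sets P \<Longrightarrow> emeasure Q A = (\<Sum>q\<in>I. ennreal (w q) * emeasure q A)" and sQ: "sets Q = sets P"
    using Q unfolding co_meas_def by blast
  have Iq: "\<And>q. q \<in> I \<Longrightarrow> prob_space q \<and> sets q = sets P \<and> absolutely_continuous P q"
    using adm I(3) unfolding admissible_Qs_def by auto
  have XiI: "\<And>q. q \<in> I \<Longrightarrow> integrable q X" using Xi I(3) by blast
  note mix = integral_mixture[OF P I(1) Iq I(4) sQ I(6) Xm XiI]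
  show "integrable Q X" by (rule mix(1))
  have "ereal (\<integral>x. X x \<partial>q) \<le> rhoQ Qs X" if "q \<in> I" for q
    unfolding rhoQ_def using that I(3) by (intro SUP_upper) auto
  then show "ereal (\<integral>x. X x \<partial>Q) \<le> rhoQ Qs X"
  proof (cases "rhoQ Qs X")
    case (real r)
    with \<open>\<And>q. q \<in> I \<Longrightarrow> ereal (\<integral>x. X x \<partial>q) \<le> rhoQ Qs X\<close>
    have "(\<Sum>q\<in>I. w q * (\<integral>x. X x \<partial>q)) \<le> (\<Sum>q\<in>I. w q * r)"
      using I(4) by (intro sum_mono mult_left_mono) auto
    also have "\<dots> = r" using I(5) by (simp add: sum_distrib_right[symmetric])
    finally show ?thesis using mix(2) real by simp
  qed (use I(2) in auto)
qed

lemma sum_ennreal_extend_zero: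
  assumes "finite I" "J \<subseteq> I"
  shows "(\<Sum>q\<in>I. ennreal (if q \<in> J then w q else 0) * f q) = (\<Sum>q\<in>J. ennreal (w q) * f q)"
proof -
  have "(\<Sum>q\<in>I. ennreal (if q \<in> J then w q else 0) * f q) = (\<Sum>q\<in>J. ennreal (if q \<in> J then w q else 0) * f q)"
    by (rule sum.mono_neutral_right) (use assms in auto)
  also have "\<dots> = (\<Sum>q\<in>J. ennreal (w q) * f q)" by (rule sum.cong) auto
  finally show ?thesis .
qed

lemma co_meas_convex:
  assumes Q1: "Q1 \<in> co_meas P Qs" and Q2: "Q2 \<in> co_meas P Qs" and u: "0 \<le> u" "u \<le> 1"
    and Q3: "sets Q3 = sets P" "\<And>A. A \<in> sets P \<Longrightarrow> emeasure Q3 A = ennreal (1-u) * emeasure Q1 A + ennreal u * emeasure Q2 A"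
  shows "Q3 \<in> co_meas P Qs"
proof -
  obtain I1 w1 where I1: "finite I1" "I1 \<noteq> {}" "I1 \<subseteq> Qs" "\<And>q. q\<in>I1 \<Longrightarrow> 0 \<le> w1 q" "sum w1 I1 = 1"
    "\<And>A. A\<in>sets P \<Longrightarrow> emeasure Q1 A = (\<Sum>q\<in>I1. ennreal (w1 q) * emeasure q A)"
    using Q1 unfolding co_meas_def by blast
  obtain I2 w2 where I2: "finite I2" "I2 \<noteq> {}" "I2 \<subseteq> Qs" "\<And>q. q\<in>I2 \<Longrightarrow> 0 \<le> w2 q" "sum w2 I2 = 1"
    "\<And>A. A\<in>sets P \<Longrightarrow> emeasure Q2 A = (\<Sum>q\<in>I2. ennreal (w2 q) * emeasure q A)"
    using Q2 unfolding co_meas_def by blast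
  define I where "I = I1 \<union> I2"
  define v1 where "v1 q = (if q \<in> I1 then w1 q else 0)" for q
  define v2 where "v2 q = (if q \<in> I2 then w2 q else 0)" for q
  define w where "w q = (1-u) * v1 q + u * v2 q" for q
  have v: "0 \<le> v1 q" "0 \<le> v2 q" for q using I1(4) I2(4) by (auto simp: v1_def v2_def)
  have fI: "finite I" using I1 I2 by (simp add: I_def)
  have sv1: "sum v1 I = 1" using I1(5) fI unfolding v1_def I_def
    by (simp add: sum.If_cases Int_absorb1)
  have sv2: "sum v2 I = 1" using I2(5) fI unfolding v2_def I_def
    by (simp add: sum.If_cases Int_absorb1)
  have "Q3 \<in> co_meas P Qs"
    unfolding co_meas_def mem_Collect_eq
  proof (intro conjI exI[of _ I] exI[of _ w])
    show "sets Q3 = sets P" by fact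
    show "finite I" by fact
    show "I \<noteq> {}" using I1(2) by (simp add: I_def)
    show "I \<subseteq> Qs" using I1(3) I2(3) by (simp add: I_def)
    show "\<forall>q\<in>I. 0 \<le> w q" using v u by (simp add: w_def)
    have "sum w I = (1-u) * sum v1 I + u * sum v2 I" unfolding w_def by (simp add: sum.distrib sum_distrib_left)
    then show "sum w I = 1" using sv1 sv2 by simp
    show "\<forall>A\<in>sets P. emeasure Q3 A = (\<Sum>q\<in>I. ennreal (w q) * emeasure q A)"
    proof
      fix A assume A: "A \<in> sets P"
      have "(\<Sum>q\<in>I. ennreal (w q) * emeasure q A)
          = (\<Sum>q\<in>I. ennreal (1-u) * (ennreal (v1 q) * emeasure q A) + ennreal u * (ennreal (v2 q) * emeasure q A))"
      proof (rule sum.cong[OF refl])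
        fix q
        have "ennreal (w q) = ennreal ((1-u) * v1 q) + ennreal (u * v2 q)"
          unfolding w_def by (rule ennreal_plus) (use u v in auto)
        also have "\<dots> = ennreal (1-u) * ennreal (v1 q) + ennreal u * ennreal (v2 q)"
          using u v by (simp add: ennreal_mult)
        finally have "ennreal (w q) = ennreal (1-u) * ennreal (v1 q) + ennreal u * ennreal (v2 q)" .
        then show "ennreal (w q) * emeasure q A = ennreal (1-u) * (ennreal (v1 q) * emeasure q A) + ennreal u * (ennreal (v2 q) * emeasure q A)"
          by (simp add: distrib_right mult.assoc)
      qed
      also have "\<dots> = ennreal (1-u) * (\<Sum>q\<in>I. ennreal (v1 q) * emeasure q A) + ennreal u * (\<Sum>q\<in>I. ennreal (v2 q) * emeasure q A)"
        by (simp add: sum.distrib sum_distrib_left)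
      also have "(\<Sum>q\<in>I. ennreal (v1 q) * emeasure q A) = emeasure Q1 A"
        unfolding v1_def using sum_ennreal_extend_zero[OF fI, of I1 w1] I1(6)[OF A] by (simp add: I_def)
      also have "(\<Sum>q\<in>I. ennreal (v2 q) * emeasure q A) = emeasure Q2 A"
        unfolding v2_def using sum_ennreal_extend_zero[OF fI, of I2 w2] I2(6)[OF A] by (simp add: I_def)
      finally show "emeasure Q3 A = (\<Sum>q\<in>I. ennreal (w q) * emeasure q A)" using Q3(2)[OF A] by simp
    qed
  qed
  then show ?thesis .
qed

lemma Ystar_nonneg:
  assumes "admissible_process P F T Y" "0 < T" "\<omega> \<in> space P"
  shows "0 \<le> Ystar T Y \<omega>"
proof -
  obtain B where B: "\<And>t. t \<in> {0..T} \<Longrightarrow> \<bar>Y t \<omega>\<bar> \<le> B" using assms unfolding admissible_process_def by blast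
  have "bdd_above ((\<lambda>t. \<bar>Y t \<omega>\<bar>) ` {0..T})" using B by (rule bdd_aboveI2[where M=B])
  then have "\<bar>Y 0 \<omega>\<bar> \<le> Ystar T Y \<omega>" unfolding Ystar_def using assms(2) by (intro cSUP_upper) auto
  then show ?thesis by linarith
qed

lemma bounded_in_Xspace:
  assumes Y: "admissible_process P F T Y" "0 < T" and X: "X \<in> borel_measurable P" "\<And>w. \<bar>X w\<bar> \<le> c" and c: "0 < c"
  shows "X \<in> Xspace P T Y"
  unfolding Xspace_def
proof (intro CollectI conjI exI[of _ c] X(1) c AE_I2)
  fix w assume "w \<in> space P"
  then have "0 \<le> Ystar T Y w" using Ystar_nonneg[OF Y] by blast
  then have "c \<le> c * (Ystar T Y w + 1)" using c by (simp add: algebra_simps)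
  then show "\<bar>X w\<bar> \<le> c * (Ystar T Y w + 1)" using X(2)[of w] by linarith
qed

lemma Qbar_absolutely_continuous:
  assumes Y: "admissible_process P F T Y" "0 < T" and adm: "admissible_Qs P Qs" and Q: "Q \<in> Qbar P T Y Qs"
  shows "absolutely_continuous P Q"
  unfolding absolutely_continuous_def
proof
  fix N assume N: "N \<in> null_sets P"
  have Qp: "prob_space Q" "sets Q = sets P" using Q unfolding Qbar_def by auto
  have Ns: "N \<in> sets P" using N by auto
  have Xs: "(indicator N :: 'a \<Rightarrow> real) \<in> Xspace P T Y" unfolding Xspace_def
  proof (intro CollectI conjI exI[of _ 1])
    show "(indicator N :: 'a \<Rightarrow> real) \<in> borel_measurable P" using Ns by simp
    have "AE w in P. w \<notin> N" using N by (rule AE_not_in)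
    then show "AE w in P. \<bar>indicator N w :: real\<bar> \<le> 1 * (Ystar T Y w + 1)"
      by (rule AE_mp) (intro AE_I2 impI, use Ystar_nonneg[OF Y] in auto)
  qed simp
  have "rhoQ Qs (indicator N) = 0"
  proof -
    have "ereal (\<integral>w. indicator N w \<partial>q) = 0" if "q \<in> Qs" for q
    proof -
      have "sets q = sets P" "absolutely_continuous P q" using adm that unfolding admissible_Qs_def by auto
      then have "N \<in> null_sets q" using N unfolding absolutely_continuous_def by auto
      then show ?thesis by (simp add: measure_def null_setsD1 emeasure_mono null_setsD2 sets.Int_space_eq2)
    qed
    moreover have "Qs \<noteq> {}" using adm unfolding admissible_Qs_def by auto
    ultimately show ?thesis unfolding rhoQ_def by simp
  qed
  then have "ereal (\<integral>w. indicator N w \<partial>Q) \<le> 0" using Q Xs unfolding Qbar_def by fastforce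
  then have "measure Q N \<le> 0" using Qp Ns by (simp add: sets.Int_space_eq2)
  then have "measure Q N = 0" by (simp add: measure_nonneg antisym)
  moreover have "emeasure Q N = ennreal (measure Q N)" using Qp(1) by (simp add: finite_measure.emeasure_eq_measure prob_space.finite_measure)
  ultimately have "emeasure Q N = 0" by simp
  then show "N \<in> null_sets Q" using Qp Ns by (simp add: null_sets_def)
qed

lemma co_meas_subset_Qbar:
  assumes P: "prob_space P" and adm: "admissible_Qs P Qs" and L1: "Ystar T Y \<in> L1_Qs P Qs"
  shows "co_meas P Qs \<subseteq> Qbar P T Y Qs"
proof
  fix Q assume Q: "Q \<in> co_meas P Qs"
  have Ym: "Ystar T Y \<in> borel_measurable P" using L1 unfolding L1_Qs_def by blast
  have Yfin: "(\<integral>\<^sup>+ x. ennreal \<bar>Ystar T Y x\<bar> \<partial>q) < \<infinity>" if q: "q \<in> Qs" for q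
  proof -
    have "(\<integral>\<^sup>+ x. ennreal \<bar>Ystar T Y x\<bar> \<partial>q) \<le> (SUP Q\<in>Qs. \<integral>\<^sup>+ x. ennreal \<bar>Ystar T Y x\<bar> \<partial>Q)"
      by (rule SUP_upper[OF q])
    also have "\<dots> < \<infinity>" using L1 unfolding L1_Qs_def by blast
    finally show ?thesis .
  qed
  have qi: "integrable q X" if q: "q \<in> Qs" and X: "X \<in> Xspace P T Y" for q X
  proof -
    have qs: "sets q = sets P" "absolutely_continuous P q" using adm q unfolding admissible_Qs_def by auto
    obtain C where C: "C > 0" "AE \<omega> in P. \<bar>X \<omega>\<bar> \<le> C * (Ystar T Y \<omega> + 1)" and Xm: "X \<in> borel_measurable P"
      using X unfolding Xspace_def by blast
    have Ymq: "Ystar T Y \<in> borel_measurable q" using Ym measurable_cong_sets[OF qs(1) refl] by blast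
    have "finite_measure q" using adm q unfolding admissible_Qs_def by (auto intro: prob_space.finite_measure)
    have iY0: "integrable q (Ystar T Y)" unfolding integrable_iff_bounded using Ymq Yfin[OF q] by simp
    have iY: "integrable q (\<lambda>x. C * (Ystar T Y x + 1))"
      using iY0 finite_measure.integrable_const[OF \<open>finite_measure q\<close>] by (intro integrable_mult_right Bochner_Integration.integrable_add) auto
    have "AE \<omega> in q. \<bar>X \<omega>\<bar> \<le> C * (Ystar T Y \<omega> + 1)" by (rule absolutely_continuous_AE[OF qs(1,2) C(2)])
    then have "AE \<omega> in q. norm (X \<omega>) \<le> norm (C * (Ystar T Y \<omega> + 1))" by (rule AE_mp) (intro AE_I2 impI, auto)
    moreover have "X \<in> borel_measurable q" using Xm measurable_cong_sets[OF qs(1) refl] by blast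
    ultimately show ?thesis by (intro Bochner_Integration.integrable_bound[OF iY]) auto
  qed
  show "Q \<in> Qbar P T Y Qs"
    unfolding Qbar_def
  proof (intro CollectI conjI ballI)
    show "prob_space Q" "sets Q = sets P" using co_meas_prob_space[OF adm Q] Q by (auto simp: co_meas_def)
    fix X assume X: "X \<in> Xspace P T Y"
    have "X \<in> borel_measurable P" using X unfolding Xspace_def by blast
    then show "integrable Q X" "ereal (\<integral>x. X x \<partial>Q) \<le> rhoQ Qs X"
      using co_meas_integral_le_rhoQ[OF P adm Q] qi X by blast+
  qed
qed

lemma abs_Ytrunc_le: "\<bar>Ytrunc k Y t \<omega>\<bar> \<le> real k"
  unfolding Ytrunc_def by linarith

definition co_densities :: "'a measure \<Rightarrow> 'a measure set \<Rightarrow> ('a \<Rightarrow> real) set" where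
  "co_densities P Qs = {h. h \<in> borel_measurable P \<and> (\<forall>x. 0 \<le> h x) \<and>
     density P (\<lambda>x. ennreal (h x)) \<in> co_meas P Qs}"

lemma co_densitiesD:
  assumes "h \<in> co_densities P Qs"
  shows "h \<in> borel_measurable P" "0 \<le> h x" "density P (\<lambda>x. ennreal (h x)) \<in> co_meas P Qs"
  using assms unfolding co_densities_def by auto

lemma integrable_co_density:
  assumes "admissible_Qs P Qs" and "h \<in> co_densities P Qs"
  shows "integrable P h"
  using integrable_real_density[OF co_densitiesD(1,2)[OF assms(2)]]
    co_meas_prob_space[OF assms(1) co_densitiesD(3)[OF assms(2)]] by blast

lemma co_densities_convex:
  assumes h1: "h1 \<in> co_densities P Qs" and h2: "h2 \<in> co_densities P Qs" and u: "0 \<le> u" "u \<le> 1"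
  shows "(\<lambda>x. (1-u) * h1 x + u * h2 x) \<in> co_densities P Qs"
  unfolding co_densities_def mem_Collect_eq
proof (intro conjI allI)
  show "(\<lambda>x. (1-u) * h1 x + u * h2 x) \<in> borel_measurable P"
    using co_densitiesD(1) h1 h2 by measurable
  show "0 \<le> (1-u) * h1 x + u * h2 x" for x
    using co_densitiesD(2)[OF h1, of x] co_densitiesD(2)[OF h2, of x] u by simp
  show "density P (\<lambda>x. ennreal ((1-u) * h1 x + u * h2 x)) \<in> co_meas P Qs"
    by (rule co_meas_convex[OF co_densitiesD(3)[OF h1] co_densitiesD(3)[OF h2] u])
       (use emeasure_density_convex[OF co_densitiesD(1,2)[OF h1] co_densitiesD(1,2)[OF h2] u] in auto)
qed

lemma co_densities_base:
  assumes P: "prob_space P" and adm: "admissible_Qs P Qs" and q: "q \<in> Qs"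
  obtains h where "h \<in> co_densities P Qs" "q = density P (\<lambda>x. ennreal (h x))"
proof -
  obtain h where h: "h \<in> borel_measurable P" "\<And>x. 0 \<le> h x" "q = density P (\<lambda>x. ennreal (h x))"
    using real_density_exists[OF P] adm q unfolding admissible_Qs_def by blast
  then have "h \<in> co_densities P Qs"
    using co_meas_singleton[OF adm q] unfolding co_densities_def by auto
  then show ?thesis using h(3) by (rule that)
qed

lemma Qbar_no_separating_bounded:
  fixes X :: "'a \<Rightarrow> real"
  assumes Y: "admissible_process P F T Y" "0 < T" and Q: "Q \<in> Qbar P T Y Qs"
    and X: "X \<in> borel_measurable P" "\<And>w. \<bar>X w\<bar> \<le> 1" and \<eta>: "0 < \<eta>"
    and sep: "\<And>q. q \<in> Qs \<Longrightarrow> (\<integral>w. X w \<partial>Q) + \<eta> \<le> (\<integral>w. X w \<partial>q)"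
  shows False
proof -
  have "rhoQ Qs (\<lambda>w. - X w) \<le> ereal ((\<integral>w. - X w \<partial>Q) - \<eta>)"
    unfolding rhoQ_def using sep by (intro SUP_least) (simp add: algebra_simps)
  moreover have "(\<lambda>w. - X w) \<in> Xspace P T Y"
    by (rule bounded_in_Xspace[OF Y, of _ 1]) (use X in auto)
  with Q have "ereal (\<integral>w. - X w \<partial>Q) \<le> rhoQ Qs (\<lambda>w. - X w)" unfolding Qbar_def by blast
  ultimately have "ereal (\<integral>w. - X w \<partial>Q) \<le> ereal ((\<integral>w. - X w \<partial>Q) - \<eta>)" by (rule order_trans[rotated])
  then show False using \<eta> by simp
qed

lemma Qbar_density_approx:
  assumes P: "prob_space P" and Y: "admissible_process P F T Y" "0 < T" and adm: "admissible_Qs P Qs"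
    and Q: "Q \<in> Qbar P T Y Qs"
    and hQ: "hQ \<in> borel_measurable P" "\<And>x. 0 \<le> hQ x" "Q = density P (\<lambda>x. ennreal (hQ x))"
    and eps: "0 < \<epsilon>"
  shows "\<exists>h\<in>co_densities P Qs. (\<integral>x. \<bar>h x - hQ x\<bar> \<partial>P) < \<epsilon>"
proof (rule ccontr)
  assume "\<not> (\<exists>h\<in>co_densities P Qs. (\<integral>x. \<bar>h x - hQ x\<bar> \<partial>P) < \<epsilon>)"
  then have far: "\<And>h. h \<in> co_densities P Qs \<Longrightarrow> \<epsilon> \<le> (\<integral>x. \<bar>h x - hQ x\<bar> \<partial>P)" by (meson not_less)
  interpret P: prob_space P by fact
  have hQi: "integrable P hQ" using integrable_real_density[OF hQ(1,2)] Q hQ(3) by (simp add: Qbar_def)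
  define A where "A = (\<lambda>h x. h x - hQ x) ` co_densities P Qs"
  have A_int: "integrable P a" if "a \<in> A" for a
    using that hQi integrable_co_density[OF adm] unfolding A_def by auto
  have A_convex: "(\<lambda>w. (1-u) * a w + u * b w) \<in> A" if ab: "a \<in> A" "b \<in> A" and u: "0 \<le> u" "u \<le> 1" for a b u
  proof -
    obtain h1 h2 where h: "h1 \<in> co_densities P Qs" "h2 \<in> co_densities P Qs"
      "a = (\<lambda>x. h1 x - hQ x)" "b = (\<lambda>x. h2 x - hQ x)"
      using ab unfolding A_def by blast
    have "(\<lambda>w. (1-u) * a w + u * b w) = (\<lambda>x. ((1-u) * h1 x + u * h2 x) - hQ x)"
      unfolding h(3,4) by (auto simp: algebra_simps)
    then show ?thesis using co_densities_convex[OF h(1,2) u] unfolding A_def by auto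
  qed
  have "Qs \<noteq> {}" using adm unfolding admissible_Qs_def by simp
  then obtain q0 where "q0 \<in> Qs" by blast
  then obtain h0 where "h0 \<in> co_densities P Qs" using co_densities_base[OF P adm] by metis
  then have "A \<noteq> {}" unfolding A_def by blast
  moreover have "\<And>a. a \<in> A \<Longrightarrow> \<epsilon> \<le> L1_norm P a" unfolding A_def L1_norm_def using far by auto
  ultimately obtain X \<eta> where X: "X \<in> borel_measurable P" "\<And>w. \<bar>X w\<bar> \<le> 1" and \<eta>: "0 < \<eta>"
    and sepX: "\<And>a. a \<in> A \<Longrightarrow> \<eta> \<le> (\<integral>w. a w * X w \<partial>P)"
    using L1_convex_separation[OF P.finite_measure_axioms A_int A_convex _ eps] by blast
  have iX: "integrable P (\<lambda>x. h x * X x)" if "integrable P h" for h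
    by (rule Bochner_Integration.integrable_bound[where f=h, OF that])
       (use X that in \<open>auto simp: abs_mult intro!: mult_left_le\<close>)
  have IQ: "(\<integral>w. X w \<partial>Q) = (\<integral>w. hQ w * X w \<partial>P)" using integral_real_density[OF hQ(1,2) X(1)] hQ(3) by simp
  have "(\<integral>w. X w \<partial>Q) + \<eta> \<le> (\<integral>w. X w \<partial>q)" if q: "q \<in> Qs" for q
  proof -
    obtain h where h: "h \<in> co_densities P Qs" "q = density P (\<lambda>x. ennreal (h x))"
      using co_densities_base[OF P adm q] by blast
    have Iq: "(\<integral>w. X w \<partial>q) = (\<integral>w. h w * X w \<partial>P)"
      using integral_real_density[OF co_densitiesD(1,2)[OF h(1)] X(1)] h(2) by simp
    have "\<eta> \<le> (\<integral>w. (h w - hQ w) * X w \<partial>P)" using sepX[of "\<lambda>x. h x - hQ x"] h(1) unfolding A_def by auto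
    also have "\<dots> = (\<integral>w. h w * X w - hQ w * X w \<partial>P)" by (simp add: algebra_simps)
    also have "\<dots> = (\<integral>w. h w * X w \<partial>P) - (\<integral>w. hQ w * X w \<partial>P)"
      by (rule Bochner_Integration.integral_diff) (use iX integrable_co_density[OF adm h(1)] hQi in auto)
    finally show ?thesis using Iq IQ by simp
  qed
  then show False by (rule Qbar_no_separating_bounded[OF Y Q X \<eta>])
qed

lemma SUP_integral_density_le:
  assumes h1: "h1 \<in> borel_measurable P" "\<And>x. 0 \<le> h1 x" "integrable P h1"
    and h2: "h2 \<in> borel_measurable P" "\<And>x. 0 \<le> h2 x" "integrable P h2"
    and Zb: "\<And>s x. s \<in> S \<Longrightarrow> \<bar>Z s x\<bar> \<le> c"
  shows "(SUP s\<in>S. ereal (\<integral>x. Z s x \<partial>density P (\<lambda>x. ennreal (h1 x))))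
    \<le> (SUP s\<in>S. ereal (\<integral>x. Z s x \<partial>density P (\<lambda>x. ennreal (h2 x)))) + ereal (c * (\<integral>x. \<bar>h1 x - h2 x\<bar> \<partial>P))"
proof (rule SUP_least)
  fix s assume s: "s \<in> S"
  have "ereal (\<integral>x. Z s x \<partial>density P (\<lambda>x. ennreal (h1 x)))
      \<le> ereal (\<integral>x. Z s x \<partial>density P (\<lambda>x. ennreal (h2 x))) + ereal (c * (\<integral>x. \<bar>h1 x - h2 x\<bar> \<partial>P))"
    using integral_density_le_L1_dist[OF h1 h2 Zb[OF s]] by simp
  also have "\<dots> \<le> (SUP s\<in>S. ereal (\<integral>x. Z s x \<partial>density P (\<lambda>x. ennreal (h2 x)))) + ereal (c * (\<integral>x. \<bar>h1 x - h2 x\<bar> \<partial>P))"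
    by (intro add_right_mono SUP_upper s)
  finally show "ereal (\<integral>x. Z s x \<partial>density P (\<lambda>x. ennreal (h1 x))) \<le> \<dots>" .
qed

lemma INF_co_meas_le_Qbar:
  assumes P: "prob_space P" and Y: "admissible_process P F T Y" "0 < T" and adm: "admissible_Qs P Qs"
    and Q: "Q \<in> Qbar P T Y Qs"
  shows "(INF Q'\<in>co_meas P Qs. SUP \<tau>\<in>S. ereal (\<integral>\<omega>. Ytrunc k Y (\<tau> \<omega>) \<omega> \<partial>Q'))
    \<le> (SUP \<tau>\<in>S. ereal (\<integral>\<omega>. Ytrunc k Y (\<tau> \<omega>) \<omega> \<partial>Q))"
    (is "(INF Q'\<in>_. ?g Q') \<le> ?g Q")
proof -
  have Qp: "prob_space Q" "sets Q = sets P" using Q unfolding Qbar_def by auto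
  obtain hQ where hQ: "hQ \<in> borel_measurable P" "\<And>x. 0 \<le> hQ x" "Q = density P (\<lambda>x. ennreal (hQ x))"
    using real_density_exists[OF P Qp Qbar_absolutely_continuous[OF Y adm Q]] by blast
  have hQi: "integrable P hQ" using integrable_real_density[OF hQ(1,2)] Qp(1) hQ(3) by simp
  show ?thesis
  proof (rule ereal_le_epsilon2)
    fix e :: real assume e: "0 < e"
    obtain h where h: "h \<in> co_densities P Qs" "(\<integral>x. \<bar>h x - hQ x\<bar> \<partial>P) < e / (real k + 1)"
      using Qbar_density_approx[OF P Y adm Q hQ, of "e / (real k + 1)"] e by auto
    have "real k * (\<integral>x. \<bar>h x - hQ x\<bar> \<partial>P) \<le> real k * (e / (real k + 1))"
      using h(2) by (intro mult_left_mono) auto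
    also have "\<dots> \<le> e" using e by (simp add: field_simps)
    finally have ke: "real k * (\<integral>x. \<bar>h x - hQ x\<bar> \<partial>P) \<le> e" .
    have "(INF Q'\<in>co_meas P Qs. ?g Q') \<le> ?g (density P (\<lambda>x. ennreal (h x)))"
      by (rule INF_lower[OF co_densitiesD(3)[OF h(1)]])
    also have "\<dots> \<le> ?g Q + ereal (real k * (\<integral>x. \<bar>h x - hQ x\<bar> \<partial>P))"
      using SUP_integral_density_le[OF co_densitiesD(1,2)[OF h(1)] integrable_co_density[OF adm h(1)]
          hQ(1,2) hQi abs_Ytrunc_le] hQ(3) by simp
    also have "\<dots> \<le> ?g Q + ereal e" using ke by (intro add_left_mono) simp
    finally show "(INF Q'\<in>co_meas P Qs. ?g Q') \<le> ?g Q + ereal e" .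
  qed
qed

theorem lemma6p4:
  fixes P :: "'a measure" and F :: "real \<Rightarrow> 'a measure" and T :: real
    and Y :: "real \<Rightarrow> 'a \<Rightarrow> real" and Qs :: "'a measure set" and k :: nat
  assumes "filtered_space P F T"
    and "admissible_process P F T Y"
    and "admissible_Qs P Qs"
    and "Ystar T Y \<in> L1_Qs P Qs"
    and "cont_from_above_at_0 P T Y Qs"
  shows "(INF Q\<in>Qbar P T Y Qs. SUP \<tau>\<in>stopping_times P F T. ereal (\<integral>\<omega>. Ytrunc k Y (\<tau> \<omega>) \<omega> \<partial>Q))
       = (INF Q\<in>co_meas P Qs. SUP \<tau>\<in>stopping_times P F T. ereal (\<integral>\<omega>. Ytrunc k Y (\<tau> \<omega>) \<omega> \<partial>Q))"
proof (rule antisym)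
  have P: "prob_space P" and T: "0 < T" using assms(1) unfolding filtered_space_def by auto
  show "(INF Q\<in>Qbar P T Y Qs. SUP \<tau>\<in>stopping_times P F T. ereal (\<integral>\<omega>. Ytrunc k Y (\<tau> \<omega>) \<omega> \<partial>Q))
      \<le> (INF Q\<in>co_meas P Qs. SUP \<tau>\<in>stopping_times P F T. ereal (\<integral>\<omega>. Ytrunc k Y (\<tau> \<omega>) \<omega> \<partial>Q))"
    by (rule INF_superset_mono[OF co_meas_subset_Qbar[OF P assms(3,4)] order_refl])
  show "(INF Q\<in>co_meas P Qs. SUP \<tau>\<in>stopping_times P F T. ereal (\<integral>\<omega>. Ytrunc k Y (\<tau> \<omega>) \<omega> \<partial>Q))
      \<le> (INF Q\<in>Qbar P T Y Qs. SUP \<tau>\<in>stopping_times P F T. ereal (\<integral>\<omega>. Ytrunc k Y (\<tau> \<omega>) \<omega> \<partial>Q))"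
    by (rule INF_greatest, rule INF_co_meas_le_Qbar[OF P assms(2) T assms(3)])
qed

end
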